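(* Let $\tau$ be any permutation of $F^3$ with $\tau(\mathbf 0)=\mathbf 0$. Then the extended perfect code $S_\tau$ of length $16$ is neighbor transitive. Among all such codes $S_\tau$ there are exactly four isomorphism classes, and they are characterized by their ranks, which take the values $11,12,13,14$. The code of rank $14$ has kernel of dimension $8$.
   Context: $F=\mathrm{GF}(2)$, $\mathbf 0$ is the all-zero vector. With $r=3$: index the coordinates of $F^{2^r}$ by $F^r$; $e_a$ is the unit vector at position $a$; $\mathcal H=\{x\in F^{2^r}:\sum_{a:x_a=1}a=\mathbf 0,\ \mathrm{wt}(x)\text{ even}\}$; $x|y$ is concatenation and $C\times D=\{x|y:x\in C,y\in D\}$; $S_\tau=\bigcup_{a\in F^r}(\mathcal H+e_a+e_{\mathbf 0})\times(\mathcal H+e_{\tau(a)}+e_{\tau(\mathbf 0)})$. Codes $C,D\subseteq F^n$ are isomorphic if $x+\pi(C)=D$ for some $x\in F^n$ and coordinate permutation $\pi$ (acting by $\pi(y)_i=y_{\pi^{-1}(i)}$). $\mathrm{Aut}(C)$ is the stabilizer of $C$ in the group of all maps $y\mapsto x+\pi(y)$. A code is neighbor transitive if $\mathrm{Aut}(C)$ acts transitively on $C$ and on the set of words at Hamming distance exactly $1$ from $C$. The rank of $C$ is the dimension of its linear span; the kernel of $C$ is $\{x: x+C=C\}$. *)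

theory Defs
  imports Main "HOL-Combinatorics.Permutations"
begin

text \<open>Binary words: a word of length n over F = GF(2) is a function nat => bool
  (True = 1) that vanishes outside {..<n}. Addition in F is exclusive or.\<close>

type_synonym word = "nat \<Rightarrow> bool"

definition Fn :: "nat \<Rightarrow> word set" where
  "Fn n = {x. \<forall>i\<ge>n. \<not> x i}"

definition zero_word :: word where
  "zero_word = (\<lambda>i. False)"

definition wadd :: "word \<Rightarrow> word \<Rightarrow> word" (infixl "\<oplus>" 65) where
  "x \<oplus> y = (\<lambda>i. x i \<noteq> y i)"

definition unit_vec :: "nat \<Rightarrow> word" where
  "unit_vec a = (\<lambda>i. i = a)"

definition wt :: "nat \<Rightarrow> word \<Rightarrow> nat" where
  "wt n x = card {i. i < n \<and> x i}"

definition hdist :: "nat \<Rightarrow> word \<Rightarrow> word \<Rightarrow> nat" where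
  "hdist n x y = wt n (x \<oplus> y)"

definition code_shift :: "word set \<Rightarrow> word \<Rightarrow> word set" where
  "code_shift C v = (\<lambda>c. c \<oplus> v) ` C"

definition wconcat :: "nat \<Rightarrow> word \<Rightarrow> word \<Rightarrow> word" where
  "wconcat n x y = (\<lambda>i. if i < n then x i else y (i - n))"

definition code_prod :: "nat \<Rightarrow> word set \<Rightarrow> word set \<Rightarrow> word set" where
  "code_prod n C D = {wconcat n x y | x y. x \<in> C \<and> y \<in> D}"

text \<open>Points of F^r are encoded as natural numbers a < 2^r via their binary
  expansion; vector addition in F^r is then bitwise exclusive or.\<close>

definition vsum :: "nat set \<Rightarrow> nat" where
  "vsum A = Finite_Set.fold (\<lambda>a s. Bit_Operations.xor a s) 0 A"

text \<open>The extended Hamming code H of length 2^r with r = 3 (coordinates indexed by F^3).\<close>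
definition Ham :: "word set" where
  "Ham = {x \<in> Fn 8. vsum {a. a < 8 \<and> x a} = 0 \<and> even (wt 8 x)}"

definition S_tau :: "(nat \<Rightarrow> nat) \<Rightarrow> word set" where
  "S_tau \<tau> = (\<Union>a\<in>{..<8}.
      code_prod 8 (code_shift (code_shift Ham (unit_vec a)) (unit_vec 0))
                  (code_shift (code_shift Ham (unit_vec (\<tau> a))) (unit_vec (\<tau> 0))))"

definition perm_word :: "(nat \<Rightarrow> nat) \<Rightarrow> word \<Rightarrow> word" where
  "perm_word \<pi> y = (\<lambda>i. y (inv \<pi> i))"

definition isometry_map :: "word \<Rightarrow> (nat \<Rightarrow> nat) \<Rightarrow> word \<Rightarrow> word" where
  "isometry_map x \<pi> y = x \<oplus> perm_word \<pi> y"

definition codes_isomorphic :: "nat \<Rightarrow> word set \<Rightarrow> word set \<Rightarrow> bool" where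
  "codes_isomorphic n C D \<longleftrightarrow>
     (\<exists>x \<pi>. x \<in> Fn n \<and> \<pi> permutes {..<n} \<and> isometry_map x \<pi> ` C = D)"

definition Aut :: "nat \<Rightarrow> word set \<Rightarrow> (word \<times> (nat \<Rightarrow> nat)) set" where
  "Aut n C = {(x, \<pi>). x \<in> Fn n \<and> \<pi> permutes {..<n} \<and> isometry_map x \<pi> ` C = C}"

definition transitive_on :: "nat \<Rightarrow> word set \<Rightarrow> word set \<Rightarrow> bool" where
  "transitive_on n C X \<longleftrightarrow>
     (\<forall>u\<in>X. \<forall>v\<in>X. \<exists>(x, \<pi>)\<in>Aut n C. isometry_map x \<pi> u = v)"

definition neighbors :: "nat \<Rightarrow> word set \<Rightarrow> word set" where
  "neighbors n C = {y \<in> Fn n. y \<notin> C \<and> (\<exists>c\<in>C. hdist n y c = 1)}"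

definition neighbor_transitive :: "nat \<Rightarrow> word set \<Rightarrow> bool" where
  "neighbor_transitive n C \<longleftrightarrow> transitive_on n C C \<and> transitive_on n C (neighbors n C)"

definition gf2_span :: "word set \<Rightarrow> word set" where
  "gf2_span S = {Finite_Set.fold (\<oplus>) zero_word B | B. finite B \<and> B \<subseteq> S}"

definition gf2_dim :: "word set \<Rightarrow> nat" where
  "gf2_dim V = (LEAST k. \<exists>B. B \<subseteq> V \<and> finite B \<and> card B = k \<and> gf2_span B = V)"

definition code_rank :: "word set \<Rightarrow> nat" where
  "code_rank C = gf2_dim (gf2_span C)"

definition code_kernel :: "nat \<Rightarrow> word set \<Rightarrow> word set" where
  "code_kernel n C = {x \<in> Fn n. code_shift C x = C}"

end

theory Submission
  imports Defs
begin

text \<open>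
  Write H_a for the coset of the extended Hamming code consisting of the even-weight words
  with syndrome a. Then S_tau is the union of the blocks H_a \<times> H_{tau a}, a code determined by
  the graph of tau. An affine coordinate permutation x \<mapsto> A x + t of either half (A linear),
  a translation by a word of H_a \<times> H_b, and the swap of the two halves map such unions of
  blocks to unions of blocks, acting on the labels. So if g \<circ> A = B \<circ> f for linear
  permutations A and B, the codes of f and g are isomorphic. Normalising tau on the basis
  1, 2, 4 and checking the 24 remaining cases shows that every tau is equivalent in this sense
  to one of four representatives, whose codes have ranks 11, 12, 13 and 14; as the rank is an
  isomorphism invariant, two codes S_tau are isomorphic iff their ranks agree.

  For neighbor transitivity, translation by a codeword of the block of a and the swap of the
  halves map S_tau onto codes of the same kind and the same rank, hence onto codes linearly
  equivalent to S_tau. Composing with the linear isomorphism back gives automorphisms moving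
  any codeword to 0 and any coordinate into the first half, where the coordinate translations
  act transitively; an automorphism moving c to 0 moves c + e_i to a unit vector.

  The representative of rank 14 is additive at no nonzero point, which forces its kernel to be
  the block H_0 \<times> H_0 of dimension 8.
\<close>

section \<open>Finite sums in Boolean groups\<close>

locale boolean_group =
  fixes add :: "'a \<Rightarrow> 'a \<Rightarrow> 'a" and zero :: 'a
  assumes add_assoc: "add (add x y) z = add x (add y z)"
    and add_commute: "add x y = add y x"
    and add_zero: "add zero x = x"
    and add_self: "add x x = zero"
begin

lemma add_left_commute: "add x (add y z) = add y (add x z)"
  by (metis add_assoc add_commute)

lemma add_left_self: "add x (add x y) = y"
  by (simp add: add_assoc[symmetric] add_self add_zero)

lemma add_right_self: "add (add y x) x = y"
  by (simp add: add_assoc add_self add_commute[of y zero] add_zero)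

definition setsum :: "'a set \<Rightarrow> 'a" where
  "setsum A = Finite_Set.fold add zero A"

lemma comp_fun_commute: "comp_fun_commute_on UNIV add"
  unfolding comp_fun_commute_on_def by (simp add: fun_eq_iff add_left_commute)

lemma setsum_empty [simp]: "setsum {} = zero"
  by (simp add: setsum_def)

lemma setsum_insert: "finite A \<Longrightarrow> x \<notin> A \<Longrightarrow> setsum (insert x A) = add x (setsum A)"
  unfolding setsum_def by (rule comp_fun_commute_on.fold_insert[OF comp_fun_commute]) auto

lemma setsum_singleton [simp]: "setsum {x} = x"
  using setsum_insert[of "{}" x] by (simp add: add_commute[of x] add_zero)

lemma setsum_toggle:
  assumes "finite A"
  shows "setsum (sym_diff A {x}) = add x (setsum A)"
proof (cases "x \<in> A")
  case True
  then have "setsum A = add x (setsum (A - {x}))"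
    using assms setsum_insert[of "A - {x}" x] by (simp add: insert_absorb)
  moreover have "sym_diff A {x} = A - {x}" using True by auto
  ultimately show ?thesis by (simp add: add_left_self)
next
  case False
  then have "sym_diff A {x} = insert x A" by auto
  then show ?thesis using setsum_insert[OF assms False] by simp
qed

lemma setsum_symdiff:
  assumes "finite A" and "finite B"
  shows "setsum (sym_diff A B) = add (setsum A) (setsum B)"
  using assms(2)
proof (induction B rule: finite_induct)
  case empty
  then show ?case by (simp add: add_commute[of _ zero] add_zero)
next
  case (insert x F)
  let ?D = "sym_diff A F"
  have "sym_diff A (insert x F) = sym_diff ?D {x}"
    using insert.hyps by auto
  then have "setsum (sym_diff A (insert x F)) = add x (setsum ?D)"
    using assms(1) insert.hyps by (simp add: setsum_toggle)
  also have "\<dots> = add (setsum A) (setsum (insert x F))"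
    using insert by (simp add: setsum_insert add_assoc add_commute add_left_commute)
  finally show ?case .
qed

end

interpretation xor_nat: boolean_group "xor :: nat \<Rightarrow> nat \<Rightarrow> nat" 0
  by unfold_locales (simp_all add: xor.assoc xor.commute xor.left_commute)

interpretation word: boolean_group "(\<oplus>)" zero_word
  by unfold_locales (auto simp: wadd_def zero_word_def)

lemma vsum_eq_setsum: "vsum = xor_nat.setsum"
  by (simp add: fun_eq_iff vsum_def xor_nat.setsum_def)

lemma gf2_span_eq: "gf2_span S = word.setsum ` {B. finite B \<and> B \<subseteq> S}"
  by (auto simp: gf2_span_def word.setsum_def)

declare word.add_self [simp] word.add_left_self [simp] word.add_right_self [simp]

lemma wadd_zero_right [simp]: "x \<oplus> zero_word = x"
  by (simp add: wadd_def zero_word_def)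

lemma wadd_zero_left [simp]: "zero_word \<oplus> x = x"
  by (simp add: wadd_def zero_word_def)

lemma wadd_right_cancel [simp]: "x \<oplus> z = y \<oplus> z \<longleftrightarrow> x = y"
  by (metis word.add_right_self)

lemma Fn_wadd: "x \<in> Fn n \<Longrightarrow> y \<in> Fn n \<Longrightarrow> x \<oplus> y \<in> Fn n"
  by (auto simp: Fn_def wadd_def)

lemma Fn_zero [simp]: "zero_word \<in> Fn n"
  by (auto simp: Fn_def zero_word_def)

lemma Fn_unit_vec: "i < n \<Longrightarrow> unit_vec i \<in> Fn n"
  by (auto simp: Fn_def unit_vec_def)

definition supp :: "nat \<Rightarrow> word \<Rightarrow> nat set" where
  "supp n x = {i. i < n \<and> x i}"

lemma supp_subset: "supp n x \<subseteq> {..<n}"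
  by (auto simp: supp_def)

lemma finite_supp [simp]: "finite (supp n x)"
  by (rule finite_subset[OF supp_subset]) simp

lemma supp_wadd: "supp n (x \<oplus> y) = sym_diff (supp n x) (supp n y)"
  by (auto simp: supp_def wadd_def)

lemma supp_unit_vec: "i < n \<Longrightarrow> supp n (unit_vec i) = {i}"
  by (auto simp: supp_def unit_vec_def)

lemma wt_eq_card_supp: "wt n x = card (supp n x)"
  by (simp add: wt_def supp_def)

lemma wt_unit_vec: "i < n \<Longrightarrow> wt n (unit_vec i) = 1"
  by (simp add: wt_eq_card_supp supp_unit_vec)

lemma Fn_eq_indicator_supp: "x \<in> Fn n \<Longrightarrow> x = (\<lambda>i. i \<in> supp n x)"
  by (auto simp: Fn_def supp_def fun_eq_iff) (meson not_le)

lemma Fn_eq_image_Pow: "Fn n = (\<lambda>S i. i \<in> S) ` Pow {..<n}"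
proof
  show "Fn n \<subseteq> (\<lambda>S i. i \<in> S) ` Pow {..<n}"
    using Fn_eq_indicator_supp supp_subset by blast
  show "(\<lambda>S i. i \<in> S) ` Pow {..<n} \<subseteq> Fn n"
    by (auto simp: Fn_def)
qed

lemma finite_Fn [simp]: "finite (Fn n)"
  by (simp add: Fn_eq_image_Pow)

lemma card_Fn: "card (Fn n) = 2 ^ n"
proof -
  have "inj_on (\<lambda>S i. i \<in> S) (Pow {..<n})"
    by (auto simp: inj_on_def fun_eq_iff)
  then show ?thesis
    by (simp add: Fn_eq_image_Pow card_image card_Pow)
qed

lemma even_card_symdiff:
  assumes "finite A" and "finite B"
  shows "even (card (sym_diff A B)) \<longleftrightarrow> (even (card A) \<longleftrightarrow> even (card B))"
proof -
  have "card A = card (A - B) + card (A \<inter> B)" "card B = card (B - A) + card (A \<inter> B)"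
    using assms by (simp_all add: card_Diff_subset_Int card_mono Int_commute)
  moreover have "card (sym_diff A B) = card (A - B) + card (B - A)"
    using assms by (subst card_Un_disjoint) auto
  ultimately show ?thesis by auto
qed

lemma even_wt_wadd: "even (wt n (x \<oplus> y)) \<longleftrightarrow> (even (wt n x) \<longleftrightarrow> even (wt n y))"
  unfolding wt_eq_card_supp supp_wadd by (rule even_card_symdiff) simp_all

lemma card_even_weight_words:
  assumes "0 < n"
  shows "2 * card {u \<in> Fn n. even (wt n u)} = 2 ^ n"
proof -
  let ?E = "{u \<in> Fn n. even (wt n u)}" and ?O = "{u \<in> Fn n. odd (wt n u)}"
  let ?flip = "\<lambda>u. u \<oplus> unit_vec 0"
  have flip: "u \<in> Fn n \<Longrightarrow> ?flip u \<in> Fn n \<and> (even (wt n (?flip u)) \<longleftrightarrow> odd (wt n u))" for u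
    using assms by (simp add: Fn_wadd Fn_unit_vec even_wt_wadd wt_unit_vec)
  have "?O = ?flip ` ?E"
  proof (intro equalityI subsetI)
    fix u assume "u \<in> ?O"
    then show "u \<in> ?flip ` ?E"
      using flip[of u] by (intro rev_image_eqI[of "?flip u"]) auto
  next
    fix u assume "u \<in> ?flip ` ?E"
    then show "u \<in> ?O"
      using flip by auto
  qed
  then have "card ?O = card ?E"
    by (simp add: card_image inj_on_def)
  moreover have "card (?E \<union> ?O) = card ?E + card ?O"
    by (rule card_Un_disjoint) auto
  moreover have "?E \<union> ?O = Fn n"
    by blast
  ultimately show ?thesis
    using card_Fn[of n] by simp
qed

section \<open>Cosets of the extended Hamming code of length 8\<close>

lemma less_8_iff: "(x::nat) < 8 \<longleftrightarrow> x = 0 \<or> x = 1 \<or> x = 2 \<or> x = 3 \<or> x = 4 \<or> x = 5 \<or> x = 6 \<or> x = 7"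
  by auto

lemma all_less_8: "(\<forall>y<8. P y) \<longleftrightarrow> P 0 \<and> P 1 \<and> P 2 \<and> P 3 \<and> P 4 \<and> P 5 \<and> P 6 \<and> P (7::nat)"
  unfolding less_8_iff by blast

lemma xor_less_8: "(x::nat) < 8 \<Longrightarrow> y < 8 \<Longrightarrow> xor x y < 8"
  unfolding less_8_iff by auto

lemma xor_eq_0_iff: "xor (a::nat) b = 0 \<longleftrightarrow> a = b"
  by (metis xor_nat.add_left_self xor.right_neutral xor_self_eq)

definition syndrome :: "word \<Rightarrow> nat" where
  "syndrome u = vsum (supp 8 u)"

definition ham_coset :: "nat \<Rightarrow> word set" where
  "ham_coset a = {u \<in> Fn 8. even (wt 8 u) \<and> syndrome u = a}"

definition coset_leader :: "nat \<Rightarrow> word" where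
  "coset_leader a = unit_vec a \<oplus> unit_vec 0"

lemma Ham_eq_ham_coset: "Ham = ham_coset 0"
  by (auto simp: Ham_def ham_coset_def syndrome_def supp_def)

lemma vsum_less_8: "S \<subseteq> {..<8} \<Longrightarrow> vsum S < 8"
proof (induction S rule: infinite_finite_induct)
  case (infinite S)
  then show ?case using finite_subset by blast
next
  case (insert x F)
  then show ?case by (simp add: vsum_eq_setsum xor_nat.setsum_insert xor_less_8)
qed (simp add: vsum_eq_setsum)

lemma syndrome_less_8: "syndrome u < 8"
  unfolding syndrome_def by (rule vsum_less_8[OF supp_subset])

lemma syndrome_wadd: "syndrome (u \<oplus> v) = xor (syndrome u) (syndrome v)"
  by (simp add: syndrome_def supp_wadd vsum_eq_setsum xor_nat.setsum_symdiff)

lemma syndrome_unit_vec: "i < 8 \<Longrightarrow> syndrome (unit_vec i) = i"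
  by (simp add: syndrome_def supp_unit_vec vsum_eq_setsum)

lemma ham_coset_wadd: "u \<in> ham_coset p \<Longrightarrow> v \<in> ham_coset q \<Longrightarrow> u \<oplus> v \<in> ham_coset (xor p q)"
  by (auto simp: ham_coset_def Fn_wadd syndrome_wadd even_wt_wadd)

lemma coset_leader_in_ham_coset: "a < 8 \<Longrightarrow> coset_leader a \<in> ham_coset a"
  by (simp add: coset_leader_def ham_coset_def Fn_wadd Fn_unit_vec syndrome_wadd syndrome_unit_vec
      even_wt_wadd wt_unit_vec)

lemma zero_in_ham_coset: "zero_word \<in> ham_coset 0"
proof -
  have "supp 8 zero_word = {}"
    by (simp add: supp_def zero_word_def)
  then show ?thesis
    by (simp add: ham_coset_def syndrome_def wt_eq_card_supp vsum_eq_setsum)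
qed

lemma finite_ham_coset [simp]: "finite (ham_coset a)"
  by (rule finite_subset[of _ "Fn 8"]) (auto simp: ham_coset_def)

lemma translate_ham_coset:
  assumes "v \<in> ham_coset a"
  shows "(\<lambda>u. u \<oplus> v) ` ham_coset p = ham_coset (xor p a)"
proof
  show "(\<lambda>u. u \<oplus> v) ` ham_coset p \<subseteq> ham_coset (xor p a)"
    using ham_coset_wadd[OF _ assms] by auto
  show "ham_coset (xor p a) \<subseteq> (\<lambda>u. u \<oplus> v) ` ham_coset p"
  proof
    fix u assume "u \<in> ham_coset (xor p a)"
    then have "u \<oplus> v \<in> ham_coset p"
      using ham_coset_wadd[OF _ assms] by (fastforce simp: xor.assoc)
    then show "u \<in> (\<lambda>u. u \<oplus> v) ` ham_coset p"
      by (rule rev_image_eqI) simp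
  qed
qed

lemma card_ham_coset_eq:
  assumes "a < 8"
  shows "card (ham_coset a) = card (ham_coset 0)"
proof -
  have "ham_coset a = (\<lambda>u. u \<oplus> coset_leader a) ` ham_coset 0"
    using translate_ham_coset[OF coset_leader_in_ham_coset[OF assms], of 0] by simp
  moreover have "inj_on (\<lambda>u. u \<oplus> coset_leader a) (ham_coset 0)"
    by (simp add: inj_on_def)
  ultimately show ?thesis
    by (simp add: card_image)
qed

lemma card_ham_coset:
  assumes "a < 8"
  shows "card (ham_coset a) = 16"
proof -
  let ?E = "{u \<in> Fn 8. even (wt 8 u)}"
  have "?E = (\<Union>b\<in>{..<8}. ham_coset b)"
    using syndrome_less_8 by (auto simp: ham_coset_def)
  then have "card ?E = (\<Sum>b<8. card (ham_coset b))"
    by (simp only:) (rule card_UN_disjoint, auto simp: ham_coset_def)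
  also have "\<dots> = (\<Sum>b<(8::nat). card (ham_coset 0))"
    by (intro sum.cong refl card_ham_coset_eq) simp
  finally have "card (ham_coset 0) = 16"
    using card_even_weight_words[of 8] by simp
  then show ?thesis
    using card_ham_coset_eq[OF assms] by simp
qed

section \<open>Words of length 16 as pairs of words of length 8\<close>

lemma wconcat_Fn: "u \<in> Fn 8 \<Longrightarrow> v \<in> Fn 8 \<Longrightarrow> wconcat 8 u v \<in> Fn 16"
  by (auto simp: Fn_def wconcat_def)

lemma wconcat_wadd: "wconcat n u v \<oplus> wconcat n u' v' = wconcat n (u \<oplus> u') (v \<oplus> v')"
  by (auto simp: wconcat_def wadd_def fun_eq_iff)

lemma wconcat_zero [simp]: "wconcat n zero_word zero_word = zero_word"
  by (auto simp: wconcat_def zero_word_def fun_eq_iff)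

lemma wconcat_inject:
  assumes "u \<in> Fn n" "u' \<in> Fn n"
  shows "wconcat n u v = wconcat n u' v' \<longleftrightarrow> u = u' \<and> v = v'"
proof
  assume eq: "wconcat n u v = wconcat n u' v'"
  have "u i = u' i" for i
    using assms fun_cong[OF eq, of i] by (cases "i < n") (auto simp: wconcat_def Fn_def)
  moreover have "v i = v' i" for i
    using fun_cong[OF eq, of "i + n"] by (simp add: wconcat_def)
  ultimately show "u = u' \<and> v = v'" by auto
qed simp

definition coset_block :: "nat \<times> nat \<Rightarrow> word set" where
  "coset_block v = code_prod 8 (ham_coset (fst v)) (ham_coset (snd v))"

definition coset_code :: "(nat \<times> nat) set \<Rightarrow> word set" where
  "coset_code W = (\<Union>v\<in>W. coset_block v)"

definition graph :: "(nat \<Rightarrow> nat) \<Rightarrow> (nat \<times> nat) set" where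
  "graph f = (\<lambda>y. (y, f y)) ` {..<8}"

lemma coset_block_iff:
  "w \<in> coset_block (p, q) \<longleftrightarrow> (\<exists>u v. w = wconcat 8 u v \<and> u \<in> ham_coset p \<and> v \<in> ham_coset q)"
  by (auto simp: coset_block_def code_prod_def)

lemma coset_block_Fn: "w \<in> coset_block v \<Longrightarrow> w \<in> Fn 16"
  by (cases v) (auto simp: coset_block_iff ham_coset_def wconcat_Fn)

lemma coset_block_wadd:
  "w \<in> coset_block (p, q) \<Longrightarrow> w' \<in> coset_block (p', q') \<Longrightarrow> w \<oplus> w' \<in> coset_block (xor p p', xor q q')"
  unfolding coset_block_iff using ham_coset_wadd wconcat_wadd by metis

lemma zero_in_coset_block: "zero_word \<in> coset_block (0, 0)"
  unfolding coset_block_iff using zero_in_ham_coset wconcat_zero by metis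

lemma coset_leaders_in_coset_block:
  "p < 8 \<Longrightarrow> q < 8 \<Longrightarrow> wconcat 8 (coset_leader p) (coset_leader q) \<in> coset_block (p, q)"
  unfolding coset_block_iff using coset_leader_in_ham_coset by blast

lemma coset_block_disjoint:
  assumes "w \<in> coset_block v" and "w \<in> coset_block v'"
  shows "v = v'"
  using assms by (cases v; cases v') (auto simp: coset_block_iff wconcat_inject ham_coset_def)

lemma card_coset_block:
  assumes "p < 8" and "q < 8"
  shows "card (coset_block (p, q)) = 256"
proof -
  have "coset_block (p, q) = (\<lambda>(u, v). wconcat 8 u v) ` (ham_coset p \<times> ham_coset q)"
    by (auto simp: coset_block_def code_prod_def)
  moreover have "inj_on (\<lambda>(u, v). wconcat 8 u v) (ham_coset p \<times> ham_coset q)"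
    by (auto simp: inj_on_def ham_coset_def wconcat_inject)
  ultimately show ?thesis
    using assms by (simp add: card_image card_cartesian_product card_ham_coset)
qed

lemma finite_coset_block [simp]: "finite (coset_block v)"
  by (rule finite_subset[of _ "Fn 16"]) (auto dest: coset_block_Fn)

lemma translate_coset_block:
  assumes "u \<in> coset_block (a, b)"
  shows "(\<lambda>w. u \<oplus> w) ` coset_block (p, q) = coset_block (xor a p, xor b q)"
proof
  show "(\<lambda>w. u \<oplus> w) ` coset_block (p, q) \<subseteq> coset_block (xor a p, xor b q)"
    using coset_block_wadd[OF assms] by auto
  show "coset_block (xor a p, xor b q) \<subseteq> (\<lambda>w. u \<oplus> w) ` coset_block (p, q)"
  proof
    fix w assume "w \<in> coset_block (xor a p, xor b q)"
    then have "u \<oplus> w \<in> coset_block (p, q)"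
      using coset_block_wadd[OF assms] by (fastforce simp: xor.assoc[symmetric])
    then show "w \<in> (\<lambda>w. u \<oplus> w) ` coset_block (p, q)"
      by (rule rev_image_eqI) simp
  qed
qed

lemma coset_code_Fn: "coset_code W \<subseteq> Fn 16"
  by (auto simp: coset_code_def dest: coset_block_Fn)

lemma finite_coset_code [simp]: "finite (coset_code W)"
  by (rule finite_subset[OF coset_code_Fn]) simp

lemma card_coset_code:
  assumes "W \<subseteq> {..<8} \<times> {..<8}"
  shows "card (coset_code W) = 256 * card W"
proof -
  have "finite W" using assms finite_subset by blast
  then have "card (coset_code W) = (\<Sum>v\<in>W. card (coset_block v))"
    unfolding coset_code_def by (rule card_UN_disjoint) (auto dest: coset_block_disjoint)
  also have "\<dots> = (\<Sum>v\<in>W. 256)"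
    using assms by (intro sum.cong) (auto simp: card_coset_block)
  finally show ?thesis by simp
qed

lemma coset_code_graph_iff: "w \<in> coset_code (graph f) \<longleftrightarrow> (\<exists>y<8. w \<in> coset_block (y, f y))"
  by (auto simp: coset_code_def graph_def)

lemma zero_in_coset_code_graph: "f 0 = 0 \<Longrightarrow> zero_word \<in> coset_code (graph f)"
  using zero_in_coset_block by (auto simp: coset_code_graph_iff intro!: exI[of _ 0])

lemma S_tau_eq_coset_code:
  assumes "\<tau> permutes {..<8}" and "\<tau> 0 = 0"
  shows "S_tau \<tau> = coset_code (graph \<tau>)"
proof -
  have shift: "code_shift (code_shift Ham (unit_vec a)) (unit_vec 0) = ham_coset a" if "a < 8" for a
  proof -
    have "code_shift (code_shift Ham (unit_vec a)) (unit_vec 0) = (\<lambda>u. u \<oplus> coset_leader a) ` ham_coset 0"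
      by (simp add: code_shift_def image_image Ham_eq_ham_coset coset_leader_def word.add_assoc)
    also have "\<dots> = ham_coset a"
      using translate_ham_coset[OF coset_leader_in_ham_coset[OF that], of 0] by simp
    finally show ?thesis .
  qed
  have "\<tau> a < 8" if "a < 8" for a
    using permutes_in_image[OF assms(1)] that by simp
  then have "S_tau \<tau> = (\<Union>a\<in>{..<8}. code_prod 8 (ham_coset a) (ham_coset (\<tau> a)))"
    unfolding S_tau_def assms(2) by (intro SUP_cong) (simp_all add: shift)
  then show ?thesis
    by (simp add: coset_code_def graph_def coset_block_def)
qed

section \<open>Isometries of the Hamming space\<close>

lemma perm_word_wadd: "perm_word \<pi> (x \<oplus> y) = perm_word \<pi> x \<oplus> perm_word \<pi> y"
  by (simp add: perm_word_def wadd_def)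

lemma perm_word_zero [simp]: "perm_word \<pi> zero_word = zero_word"
  by (simp add: perm_word_def zero_word_def)

lemma perm_word_id [simp]: "perm_word id y = y"
  by (simp add: perm_word_def)

lemma perm_word_Fn:
  assumes "\<pi> permutes {..<n}" and "x \<in> Fn n"
  shows "perm_word \<pi> x \<in> Fn n"
  using assms(2) permutes_not_in[OF permutes_inv[OF assms(1)]] by (auto simp: Fn_def perm_word_def)

lemma perm_word_comp: "bij \<pi> \<Longrightarrow> bij \<rho> \<Longrightarrow> perm_word \<pi> (perm_word \<rho> y) = perm_word (\<pi> \<circ> \<rho>) y"
  by (simp add: perm_word_def o_inv_distrib)

lemma perm_word_inv: "bij \<pi> \<Longrightarrow> perm_word (inv \<pi>) (perm_word \<pi> y) = y"
  by (simp add: perm_word_def inv_inv_eq bij_is_inj)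

lemma inj_perm_word: "bij \<pi> \<Longrightarrow> inj (perm_word \<pi>)"
  by (metis injI perm_word_inv)

lemma perm_word_unit_vec: "bij \<pi> \<Longrightarrow> perm_word \<pi> (unit_vec i) = unit_vec (\<pi> i)"
  by (auto simp: perm_word_def unit_vec_def fun_eq_iff bij_inv_eq_iff inv_f_f bij_is_inj)

lemma isometry_map_wadd: "isometry_map x \<pi> (y \<oplus> z) = isometry_map x \<pi> y \<oplus> perm_word \<pi> z"
  by (simp add: isometry_map_def perm_word_wadd word.add_assoc)

lemma isometry_map_comp:
  "bij \<pi> \<Longrightarrow> bij \<rho> \<Longrightarrow> isometry_map x \<pi> (isometry_map y \<rho> z) = isometry_map (x \<oplus> perm_word \<pi> y) (\<pi> \<circ> \<rho>) z"
  by (simp add: isometry_map_def perm_word_wadd perm_word_comp word.add_assoc)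

lemma isometry_map_inv: "bij \<pi> \<Longrightarrow> isometry_map (perm_word (inv \<pi>) x) (inv \<pi>) (isometry_map x \<pi> z) = z"
  by (simp add: isometry_map_def perm_word_wadd perm_word_inv word.add_assoc[symmetric])

definition isometries :: "nat \<Rightarrow> word set \<Rightarrow> word set \<Rightarrow> (word \<times> (nat \<Rightarrow> nat)) set" where
  "isometries n C D = {(x, \<pi>). x \<in> Fn n \<and> \<pi> permutes {..<n} \<and> isometry_map x \<pi> ` C = D}"

lemma isometries_bij: "(x, \<pi>) \<in> isometries n C D \<Longrightarrow> bij \<pi>"
  by (auto simp: isometries_def permutes_bij)

lemma Aut_eq_isometries: "Aut n C = isometries n C C"
  by (simp add: Aut_def isometries_def)

lemma codes_isomorphic_iff_isometries: "codes_isomorphic n C D \<longleftrightarrow> isometries n C D \<noteq> {}"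
  by (auto simp: codes_isomorphic_def isometries_def)

lemma isometries_comp:
  assumes "(x, \<pi>) \<in> isometries n C D" and "(y, \<rho>) \<in> isometries n D E"
  shows "(y \<oplus> perm_word \<rho> x, \<rho> \<circ> \<pi>) \<in> isometries n C E"
proof -
  have "isometry_map (y \<oplus> perm_word \<rho> x) (\<rho> \<circ> \<pi>) ` C = isometry_map y \<rho> ` isometry_map x \<pi> ` C"
    using isometries_bij[OF assms(1)] isometries_bij[OF assms(2)]
    by (simp add: image_image isometry_map_comp)
  also have "\<dots> = E"
    using assms by (simp add: isometries_def)
  finally show ?thesis
    using assms by (auto simp: isometries_def Fn_wadd perm_word_Fn permutes_compose)
qed

lemma isometries_inv:
  assumes "(x, \<pi>) \<in> isometries n C D"
  shows "(perm_word (inv \<pi>) x, inv \<pi>) \<in> isometries n D C"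
proof -
  have \<pi>: "\<pi> permutes {..<n}"
    using assms by (simp add: isometries_def)
  then have "isometry_map (perm_word (inv \<pi>) x) (inv \<pi>) ` D = C"
    using assms by (auto simp: isometries_def image_image isometry_map_inv permutes_bij)
  then show ?thesis
    using assms \<pi> by (simp add: isometries_def perm_word_Fn permutes_inv)
qed

lemma codes_isomorphic_sym: "codes_isomorphic n C D \<Longrightarrow> codes_isomorphic n D C"
  unfolding codes_isomorphic_iff_isometries using isometries_inv by fast

definition Aut_related :: "nat \<Rightarrow> word set \<Rightarrow> word \<Rightarrow> word \<Rightarrow> bool" where
  "Aut_related n C u v \<longleftrightarrow> (\<exists>(x, \<pi>)\<in>Aut n C. isometry_map x \<pi> u = v)"

lemma Aut_related_via:
  assumes "(x, \<pi>) \<in> isometries n C D" and "(y, \<rho>) \<in> isometries n D C"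
  shows "Aut_related n C u (isometry_map y \<rho> (isometry_map x \<pi> u))"
proof -
  have "bij \<pi>" "bij \<rho>"
    using assms by (simp_all add: isometries_bij)
  then show ?thesis
    using isometries_comp[OF assms]
    by (auto simp: Aut_related_def Aut_eq_isometries isometry_map_comp)
qed

lemma Aut_related_trans:
  assumes "Aut_related n C u v" and "Aut_related n C v w"
  shows "Aut_related n C u w"
proof -
  obtain x \<pi> y \<rho> where "(x, \<pi>) \<in> isometries n C C" "(y, \<rho>) \<in> isometries n C C"
    "isometry_map x \<pi> u = v" "isometry_map y \<rho> v = w"
    using assms by (auto simp: Aut_related_def Aut_eq_isometries)
  then show ?thesis
    using Aut_related_via by metis
qed

lemma Aut_related_sym:
  assumes "Aut_related n C u v"
  shows "Aut_related n C v u"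
proof -
  obtain x \<pi> where "(x, \<pi>) \<in> isometries n C C" "isometry_map x \<pi> u = v"
    using assms by (auto simp: Aut_related_def Aut_eq_isometries)
  then show ?thesis
    using isometries_inv isometry_map_inv[OF isometries_bij]
    by (fastforce simp: Aut_related_def Aut_eq_isometries)
qed

lemma transitive_on_if_Aut_related:
  assumes "\<And>u. u \<in> X \<Longrightarrow> Aut_related n C u w"
  shows "transitive_on n C X"
  unfolding transitive_on_def
  using Aut_related_trans[OF assms Aut_related_sym[OF assms]] by (auto simp: Aut_related_def)

lemma neighbors_eq_unit_shift:
  assumes "u \<in> neighbors n C" and "C \<subseteq> Fn n"
  shows "\<exists>c\<in>C. \<exists>i<n. u = c \<oplus> unit_vec i"
proof -
  obtain c where c: "c \<in> C" "u \<in> Fn n" "hdist n u c = 1"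
    using assms(1) by (auto simp: neighbors_def)
  then have "card (supp n (u \<oplus> c)) = 1"
    by (simp add: hdist_def wt_eq_card_supp)
  then obtain i where i: "supp n (u \<oplus> c) = {i}"
    by (auto simp: card_Suc_eq)
  have "u \<oplus> c \<in> Fn n"
    using c assms(2) Fn_wadd by blast
  then have "u \<oplus> c = unit_vec i"
    using Fn_eq_indicator_supp[of "u \<oplus> c" n] i by (simp add: unit_vec_def)
  then have "u = c \<oplus> unit_vec i"
    by (metis word.add_left_self word.add_commute)
  moreover have "i < n"
    using i by (auto simp: supp_def)
  ultimately show ?thesis
    using c by blast
qed

section \<open>Dimension of binary linear codes\<close>

definition gf2_subspace :: "word set \<Rightarrow> bool" where
  "gf2_subspace V \<longleftrightarrow> zero_word \<in> V \<and> (\<forall>x\<in>V. \<forall>y\<in>V. x \<oplus> y \<in> V)"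

lemma setsum_in_gf2_subspace:
  assumes "gf2_subspace V" and "finite X" and "X \<subseteq> V"
  shows "word.setsum X \<in> V"
  using assms(2,3)
proof (induction X rule: finite_induct)
  case empty
  then show ?case using assms(1) by (simp add: gf2_subspace_def)
next
  case (insert x F)
  then show ?case using assms(1) by (simp add: word.setsum_insert gf2_subspace_def)
qed

lemma gf2_span_least: "gf2_subspace V \<Longrightarrow> S \<subseteq> V \<Longrightarrow> gf2_span S \<subseteq> V"
  by (auto simp: gf2_span_eq intro: setsum_in_gf2_subspace)

lemma setsum_in_gf2_span: "finite X \<Longrightarrow> X \<subseteq> S \<Longrightarrow> word.setsum X \<in> gf2_span S"
  by (auto simp: gf2_span_eq)

lemma gf2_subspace_span: "gf2_subspace (gf2_span S)"
  unfolding gf2_subspace_def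
proof (intro conjI ballI)
  show "zero_word \<in> gf2_span S"
    using setsum_in_gf2_span[of "{}" S] by simp
  fix x y assume "x \<in> gf2_span S" "y \<in> gf2_span S"
  then obtain X Y where "finite X" "X \<subseteq> S" "x = word.setsum X" "finite Y" "Y \<subseteq> S" "y = word.setsum Y"
    by (auto simp: gf2_span_eq)
  then show "x \<oplus> y \<in> gf2_span S"
    using word.setsum_symdiff[of X Y] setsum_in_gf2_span[of "sym_diff X Y" S] by auto
qed

lemma gf2_span_superset: "S \<subseteq> gf2_span S"
  using setsum_in_gf2_span[of "{x}" S for x] by auto

lemma gf2_span_mono: "S \<subseteq> T \<Longrightarrow> gf2_span S \<subseteq> gf2_span T"
  by (auto simp: gf2_span_def)

lemma gf2_span_wadd: "x \<in> gf2_span S \<Longrightarrow> y \<in> gf2_span S \<Longrightarrow> x \<oplus> y \<in> gf2_span S"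
  using gf2_subspace_span by (simp add: gf2_subspace_def)

lemma gf2_span_Fn: "S \<subseteq> Fn n \<Longrightarrow> gf2_span S \<subseteq> Fn n"
  by (rule gf2_span_least) (simp_all add: gf2_subspace_def Fn_wadd)

lemma gf2_dim_basis:
  assumes "gf2_subspace V" and "finite V"
  obtains B where "B \<subseteq> V" "finite B" "card B = gf2_dim V" "gf2_span B = V"
proof -
  let ?P = "\<lambda>k. \<exists>B. B \<subseteq> V \<and> finite B \<and> card B = k \<and> gf2_span B = V"
  have "?P (card V)"
    using assms gf2_span_least[of V V] gf2_span_superset[of V] by blast
  then have "?P (gf2_dim V)"
    unfolding gf2_dim_def by (rule LeastI)
  then show ?thesis
    using that by blast
qed

text \<open>If two subsets of a minimal spanning set B had the same sum, an element b of their
  symmetric difference would be a sum of elements of B - {b}, so B - {b} would span as well.\<close>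
lemma inj_on_setsum_basis:
  assumes B: "B \<subseteq> V" "finite B" "card B = gf2_dim V" "gf2_span B = V"
  shows "inj_on word.setsum (Pow B)"
proof (rule inj_onI, rule ccontr)
  fix X Y assume XY: "X \<in> Pow B" "Y \<in> Pow B" "word.setsum X = word.setsum Y" "X \<noteq> Y"
  then obtain b where b: "b \<in> sym_diff X Y"
    by blast
  have fin: "finite X" "finite Y"
    using XY B(2) finite_subset by auto
  then have "word.setsum (sym_diff X Y) = zero_word"
    using XY(3) by (simp add: word.setsum_symdiff)
  then have b_sum: "word.setsum (sym_diff X Y - {b}) = b"
    using b fin word.setsum_insert[of "sym_diff X Y - {b}" b]
    by (simp add: insert_absorb) (metis wadd_zero_right word.add_left_self)
  have "gf2_span (B - {b}) = V"
  proof
    show "gf2_span (B - {b}) \<subseteq> V"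
      using gf2_span_mono[of "B - {b}" B] B(4) by auto
    have "b \<in> gf2_span (B - {b})"
      using setsum_in_gf2_span[of "sym_diff X Y - {b}" "B - {b}"] b_sum fin XY(1,2) by auto
    then have "B \<subseteq> gf2_span (B - {b})"
      using gf2_span_superset[of "B - {b}"] by blast
    then show "V \<subseteq> gf2_span (B - {b})"
      using gf2_span_least[OF gf2_subspace_span] B(4) by blast
  qed
  moreover have "card (B - {b}) < gf2_dim V"
    using B(2,3) b XY(1,2) by (metis Diff_iff PowD UnE card_Diff1_less subsetD)
  ultimately show False
    using B(1,2) not_less_Least[of "card (B - {b})"] unfolding gf2_dim_def by blast
qed

lemma card_gf2_subspace:
  assumes "gf2_subspace V" and "finite V"
  shows "card V = 2 ^ gf2_dim V"
proof -
  obtain B where B: "B \<subseteq> V" "finite B" "card B = gf2_dim V" "gf2_span B = V"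
    using gf2_dim_basis[OF assms] .
  then have "V = word.setsum ` Pow B"
    using finite_subset by (auto simp: gf2_span_eq)
  then show ?thesis
    using inj_on_setsum_basis[OF B] B(2,3) by (simp add: card_image card_Pow)
qed

lemma gf2_dim_eq:
  assumes "gf2_subspace V" and "finite V" and "card V = 2 ^ k"
  shows "gf2_dim V = k"
  using card_gf2_subspace[OF assms(1,2)] assms(3) by (simp add: power_inject_exp)

lemma gf2_dim_eq_iff_card:
  assumes "gf2_subspace V" "finite V" "gf2_subspace W" "finite W"
  shows "gf2_dim V = gf2_dim W \<longleftrightarrow> card V = card W"
  using assms by (simp add: card_gf2_subspace)

section \<open>Rank and kernel are isomorphism invariants\<close>

text \<open>As 0 \<in> D, the translation part is the image of a codeword c0, so D is the image of
  c0 + C under the linear map perm_word \<pi>.\<close>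
lemma gf2_span_isometric_image:
  assumes iso: "(x, \<pi>) \<in> isometries n C D" and zero: "zero_word \<in> C" "zero_word \<in> D"
  shows "gf2_span D = perm_word \<pi> ` gf2_span C"
proof -
  let ?L = "perm_word \<pi>"
  have D_eq: "D = isometry_map x \<pi> ` C"
    using iso by (simp add: isometries_def)
  obtain c0 where c0: "c0 \<in> C" "isometry_map x \<pi> c0 = zero_word"
    using zero(2) D_eq by auto
  then have x_eq: "x = ?L c0"
    by (simp add: isometry_map_def) (metis word.add_left_self wadd_zero_right)
  have "x \<in> D"
    using zero(1) D_eq by (force simp: isometry_map_def)
  have "gf2_subspace (?L ` gf2_span C)"
    using gf2_subspace_span[of C] unfolding gf2_subspace_def
    by (auto simp: perm_word_wadd[symmetric] intro!: image_eqI[of zero_word _ zero_word])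
  moreover have "D \<subseteq> ?L ` gf2_span C"
  proof
    fix d assume "d \<in> D"
    then obtain c where "c \<in> C" "d = isometry_map x \<pi> c"
      using D_eq by auto
    moreover from this have "d = ?L (c0 \<oplus> c)"
      by (simp add: isometry_map_def x_eq perm_word_wadd)
    moreover have "c0 \<oplus> c \<in> gf2_span C"
      using c0 \<open>c \<in> C\<close> gf2_span_superset[of C] gf2_span_wadd by blast
    ultimately show "d \<in> ?L ` gf2_span C"
      by blast
  qed
  ultimately have "gf2_span D \<subseteq> ?L ` gf2_span C"
    by (rule gf2_span_least)
  moreover have "gf2_span C \<subseteq> {w. ?L w \<in> gf2_span D}"
  proof (rule gf2_span_least)
    show "gf2_subspace {w. ?L w \<in> gf2_span D}"
      using gf2_subspace_span[of D] by (auto simp: gf2_subspace_def perm_word_wadd)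
    have "x \<oplus> ?L c \<in> D" if "c \<in> C" for c
      using that D_eq by (auto simp: isometry_map_def)
    then have "x \<oplus> (x \<oplus> ?L c) \<in> gf2_span D" if "c \<in> C" for c
      using gf2_span_wadd[OF subsetD[OF gf2_span_superset \<open>x \<in> D\<close>]] gf2_span_superset that
      by blast
    then show "C \<subseteq> {w. ?L w \<in> gf2_span D}"
      by auto
  qed
  then have "?L ` gf2_span C \<subseteq> gf2_span D"
    by blast
  ultimately show ?thesis
    by (rule equalityI)
qed

lemma code_rank_isomorphic:
  assumes "codes_isomorphic n C D" and "zero_word \<in> C" "zero_word \<in> D" and "C \<subseteq> Fn n"
  shows "code_rank C = code_rank D"
proof -
  obtain x \<pi> where iso: "(x, \<pi>) \<in> isometries n C D"
    using assms(1) by (auto simp: codes_isomorphic_iff_isometries)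
  have span_D: "gf2_span D = perm_word \<pi> ` gf2_span C"
    using gf2_span_isometric_image[OF iso assms(2,3)] .
  have fin: "finite (gf2_span C)"
    by (rule finite_subset[OF gf2_span_Fn[OF assms(4)]]) simp
  have "inj_on (perm_word \<pi>) (gf2_span C)"
    using inj_perm_word[OF isometries_bij[OF iso]] by (rule inj_on_subset) simp
  then have "card (gf2_span D) = card (gf2_span C)"
    unfolding span_D by (rule card_image)
  moreover have "finite (gf2_span D)"
    unfolding span_D using fin by (rule finite_imageI)
  ultimately show ?thesis
    unfolding code_rank_def using fin by (simp add: gf2_dim_eq_iff_card gf2_subspace_span)
qed

lemma code_kernel_Fn: "code_kernel n C \<subseteq> Fn n"
  by (auto simp: code_kernel_def)

lemma finite_code_kernel [simp]: "finite (code_kernel n C)"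
  by (rule finite_subset[OF code_kernel_Fn]) simp

lemma gf2_subspace_code_kernel: "gf2_subspace (code_kernel n C)"
  unfolding gf2_subspace_def
proof (intro conjI ballI)
  show "zero_word \<in> code_kernel n C"
    by (simp add: code_kernel_def code_shift_def)
  fix a b assume "a \<in> code_kernel n C" "b \<in> code_kernel n C"
  moreover have "code_shift C (a \<oplus> b) = code_shift (code_shift C a) b"
    by (simp add: code_shift_def image_image word.add_assoc)
  ultimately show "a \<oplus> b \<in> code_kernel n C"
    by (simp add: code_kernel_def Fn_wadd)
qed

lemma perm_word_code_kernel:
  assumes "(x, \<pi>) \<in> isometries n C D"
  shows "perm_word \<pi> ` code_kernel n C \<subseteq> code_kernel n D"
proof
  fix w assume "w \<in> perm_word \<pi> ` code_kernel n C"
  then obtain k where k: "k \<in> Fn n" "code_shift C k = C" "w = perm_word \<pi> k"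
    by (auto simp: code_kernel_def)
  have D_eq: "D = isometry_map x \<pi> ` C"
    using assms by (simp add: isometries_def)
  have "code_shift D w = isometry_map x \<pi> ` code_shift C k"
    unfolding D_eq code_shift_def image_image k(3)
    by (simp add: isometry_map_def perm_word_wadd word.add_assoc)
  then show "w \<in> code_kernel n D"
    using k assms by (simp add: code_kernel_def D_eq[symmetric] perm_word_Fn isometries_def)
qed

lemma gf2_dim_code_kernel_isomorphic:
  assumes "codes_isomorphic n C D"
  shows "gf2_dim (code_kernel n C) = gf2_dim (code_kernel n D)"
proof -
  have "card (code_kernel n C) \<le> card (code_kernel n D)" if CD: "codes_isomorphic n C D" for C D
  proof -
    obtain x \<pi> where iso: "(x, \<pi>) \<in> isometries n C D"
      using CD by (auto simp: codes_isomorphic_iff_isometries)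
    have "inj_on (perm_word \<pi>) (code_kernel n C)"
      using inj_perm_word[OF isometries_bij[OF iso]] by (rule inj_on_subset) simp
    then have "card (code_kernel n C) = card (perm_word \<pi> ` code_kernel n C)"
      by (simp add: card_image)
    also have "\<dots> \<le> card (code_kernel n D)"
      using perm_word_code_kernel[OF iso] by (simp add: card_mono)
    finally show ?thesis .
  qed
  then have "card (code_kernel n C) = card (code_kernel n D)"
    using assms codes_isomorphic_sym by (metis le_antisym)
  then show ?thesis
    by (simp add: gf2_dim_eq_iff_card gf2_subspace_code_kernel)
qed

section \<open>Affine permutations of the coordinates\<close>

definition linear_perm :: "(nat \<Rightarrow> nat) \<Rightarrow> bool" where
  "linear_perm A \<longleftrightarrow> A permutes {..<8} \<and> (\<forall>x<8. \<forall>y<8. A (xor x y) = xor (A x) (A y))"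

lemma linear_perm_zero: "linear_perm A \<Longrightarrow> A 0 = 0"
  unfolding linear_perm_def by (metis xor_self_eq zero_less_numeral)

lemma linear_perm_less_8: "linear_perm A \<Longrightarrow> x < 8 \<Longrightarrow> A x < 8"
  unfolding linear_perm_def using permutes_in_image by fastforce

lemma linear_perm_comp: "linear_perm A \<Longrightarrow> linear_perm B \<Longrightarrow> linear_perm (B \<circ> A)"
  by (simp add: linear_perm_def permutes_compose linear_perm_less_8)

lemma linear_perm_inv:
  assumes "linear_perm A"
  shows "linear_perm (inv A)"
proof -
  have A: "A permutes {..<8}"
    using assms by (simp add: linear_perm_def)
  have "inv A (xor x y) = xor (inv A x) (inv A y)" if "x < 8" "y < 8" for x y
  proof -
    have "inv A x < 8" "inv A y < 8"
      using that permutes_in_image[OF permutes_inv[OF A]] by auto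
    then have "A (xor (inv A x) (inv A y)) = xor x y"
      using assms by (simp add: linear_perm_def permutes_inverses(1)[OF A])
    then show ?thesis
      by (metis A permutes_inverses(2))
  qed
  then show ?thesis
    using A by (simp add: linear_perm_def permutes_inv)
qed

text \<open>The linear map of F^3 sending the basis vectors 1, 2, 4 to c1, c2, c4.\<close>
definition lin_map :: "nat \<Rightarrow> nat \<Rightarrow> nat \<Rightarrow> nat \<Rightarrow> nat" where
  "lin_map c1 c2 c4 x = (if x = 0 then 0 else if x = 1 then c1 else if x = 2 then c2
     else if x = 3 then xor c1 c2 else if x = 4 then c4 else if x = 5 then xor c1 c4
     else if x = 6 then xor c2 c4 else if x = 7 then xor (xor c1 c2) c4 else x)"

lemma lin_map_xor:
  "x < 8 \<Longrightarrow> y < 8 \<Longrightarrow> lin_map c1 c2 c4 (xor x y) = xor (lin_map c1 c2 c4 x) (lin_map c1 c2 c4 y)"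
  unfolding less_8_iff
  by (elim disjE; simp add: lin_map_def xor.assoc xor.commute xor.left_commute xor_nat.add_left_self)

lemma linear_perm_lin_map:
  assumes "c1 < 8" "c2 < 8" "c4 < 8" "c1 \<noteq> 0" "c2 \<noteq> 0" "c4 \<noteq> 0"
    "c1 \<noteq> c2" "c1 \<noteq> c4" "c2 \<noteq> c4" "xor c1 c2 \<noteq> c4"
  shows "linear_perm (lin_map c1 c2 c4)"
proof -
  let ?L = "lin_map c1 c2 c4"
  have kernel: "z = 0" if "z < 8" "?L z = 0" for z
    using that unfolding less_8_iff
    by (elim conjE disjE) (use assms in \<open>simp_all add: lin_map_def xor_eq_0_iff\<close>)
  have "inj_on ?L {..<8}"
  proof (rule inj_onI)
    fix x y assume "x \<in> {..<8}" "y \<in> {..<8}" "?L x = ?L y"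
    then have "xor x y = 0"
      using kernel[of "xor x y"] lin_map_xor[of x y] by (simp add: xor_less_8)
    then show "x = y"
      by (simp add: xor_eq_0_iff)
  qed
  moreover have "?L x < 8" if "x < 8" for x
    using that assms by (simp add: lin_map_def xor_less_8)
  ultimately have "?L permutes {..<8}"
    by (intro inj_imp_permutes) (auto simp: lin_map_def)
  then show ?thesis
    by (simp add: linear_perm_def lin_map_xor)
qed

definition affine_perm :: "(nat \<Rightarrow> nat) \<Rightarrow> nat \<Rightarrow> nat \<Rightarrow> nat" where
  "affine_perm A t p = (if p < 8 then xor (A p) t else p)"

lemma affine_perm_permutes:
  assumes "linear_perm A" and "t < 8"
  shows "affine_perm A t permutes {..<8}"
proof (rule inj_imp_permutes)
  show "inj_on (affine_perm A t) {..<8}"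
  proof (rule inj_onI)
    fix x y assume "x \<in> {..<8}" "y \<in> {..<8}" "affine_perm A t x = affine_perm A t y"
    then have "A x = A y" "x < 8" "y < 8"
      by (auto simp: affine_perm_def) (metis xor.assoc xor_self_eq xor.right_neutral)
    then show "x = y"
      using assms(1) unfolding linear_perm_def by (meson permutes_inj inj_eq)
  qed
qed (use assms linear_perm_less_8 xor_less_8 in \<open>auto simp: affine_perm_def\<close>)

lemma vsum_affine_perm_image:
  assumes A: "linear_perm A" and t: "t < 8" and S: "S \<subseteq> {..<8}"
  shows "vsum (affine_perm A t ` S) = xor (A (vsum S)) (if odd (card S) then t else 0)"
proof -
  have fin: "finite S"
    using S finite_subset by blast
  have inj: "inj_on (affine_perm A t) {..<8}"
    using affine_perm_permutes[OF A t] permutes_inj_on by blast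
  show ?thesis
    using fin S
  proof (induction S rule: finite_induct)
    case empty
    then show ?case
      using linear_perm_zero[OF A] by (simp add: vsum_eq_setsum)
  next
    case (insert x F)
    have x: "x < 8" and "vsum F < 8"
      using insert vsum_less_8 by auto
    moreover have "affine_perm A t x \<notin> affine_perm A t ` F"
      using insert inj by (auto simp: inj_on_def)
    ultimately show ?case
      using insert A
      by (auto simp: vsum_eq_setsum xor_nat.setsum_insert affine_perm_def linear_perm_def
          xor.assoc xor.commute xor.left_commute xor_nat.add_left_self)
  qed
qed

text \<open>The translation part t is added once per support point, so it cancels on even-weight words.\<close>
lemma perm_word_affine_ham_coset:
  assumes "linear_perm A" and "t < 8" and "u \<in> ham_coset p"
  shows "perm_word (affine_perm A t) u \<in> ham_coset (A p)"
proof -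
  have \<pi>: "affine_perm A t permutes {..<8}"
    by (rule affine_perm_permutes[OF assms(1,2)])
  have supp: "supp 8 (perm_word (affine_perm A t) u) = affine_perm A t ` supp 8 u"
    using permutes_in_image[OF \<pi>] permutes_in_image[OF permutes_inv[OF \<pi>]] permutes_inverses[OF \<pi>]
    by (auto simp: supp_def perm_word_def image_iff) metis
  have "card (affine_perm A t ` supp 8 u) = card (supp 8 u)"
    using permutes_inj_on[OF \<pi>] supp_subset by (meson card_image inj_on_subset)
  then show ?thesis
    using assms vsum_affine_perm_image[OF assms(1,2) supp_subset, of u] perm_word_Fn[OF \<pi>]
    by (auto simp: ham_coset_def syndrome_def wt_eq_card_supp supp)
qed

definition block_perm :: "(nat \<Rightarrow> nat) \<Rightarrow> (nat \<Rightarrow> nat) \<Rightarrow> nat \<Rightarrow> nat" where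
  "block_perm \<alpha> \<beta> i = (if i < 8 then \<alpha> i else if i < 16 then \<beta> (i - 8) + 8 else i)"

lemma block_perm_comp:
  assumes "\<alpha>' permutes {..<8}" and "\<beta>' permutes {..<8}"
  shows "block_perm \<alpha> \<beta> \<circ> block_perm \<alpha>' \<beta>' = block_perm (\<alpha> \<circ> \<alpha>') (\<beta> \<circ> \<beta>')"
proof
  fix i
  have "x < 8 \<Longrightarrow> \<alpha>' x < 8" "x < 8 \<Longrightarrow> \<beta>' x < 8" for x
    using permutes_in_image[OF assms(1)] permutes_in_image[OF assms(2)] by auto
  then show "(block_perm \<alpha> \<beta> \<circ> block_perm \<alpha>' \<beta>') i = block_perm (\<alpha> \<circ> \<alpha>') (\<beta> \<circ> \<beta>') i"
    by (auto simp: block_perm_def)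
qed

lemma block_perm_id: "block_perm id id = id"
  by (auto simp: block_perm_def fun_eq_iff)

lemma block_perm_permutes:
  assumes "\<alpha> permutes {..<8}" and "\<beta> permutes {..<8}"
  shows "block_perm \<alpha> \<beta> permutes {..<16}"
proof (rule inj_imp_permutes)
  have "block_perm (inv \<alpha>) (inv \<beta>) \<circ> block_perm \<alpha> \<beta> = id"
    by (simp add: block_perm_comp[OF assms] permutes_inv_o[OF assms(1)] permutes_inv_o[OF assms(2)]
        block_perm_id)
  then show "inj_on (block_perm \<alpha> \<beta>) {..<16}"
    by (metis inj_on_id inj_on_imageI2)
  have "\<alpha> x < 8" "\<beta> x < 8" if "x < 8" for x
    using that permutes_in_image[OF assms(1)] permutes_in_image[OF assms(2)] by auto
  then show "block_perm \<alpha> \<beta> x \<in> {..<16}" if "x \<in> {..<16}" for x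
    using that by (fastforce simp: block_perm_def)
qed (auto simp: block_perm_def)

lemma inv_block_perm:
  assumes "\<alpha> permutes {..<8}" and "\<beta> permutes {..<8}"
  shows "inv (block_perm \<alpha> \<beta>) = block_perm (inv \<alpha>) (inv \<beta>)"
proof (rule inv_unique_comp)
  have inv: "inv \<alpha> permutes {..<8}" "inv \<beta> permutes {..<8}"
    using assms by (simp_all add: permutes_inv)
  show "block_perm \<alpha> \<beta> \<circ> block_perm (inv \<alpha>) (inv \<beta>) = id"
    by (simp add: block_perm_comp[OF inv] permutes_inv_o[OF assms(1)] permutes_inv_o[OF assms(2)]
        block_perm_id)
  show "block_perm (inv \<alpha>) (inv \<beta>) \<circ> block_perm \<alpha> \<beta> = id"
    by (simp add: block_perm_comp[OF assms] permutes_inv_o[OF assms(1)] permutes_inv_o[OF assms(2)]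
        block_perm_id)
qed

lemma perm_word_block_perm:
  assumes "\<alpha> permutes {..<8}" and "\<beta> permutes {..<8}"
  shows "perm_word (block_perm \<alpha> \<beta>) (wconcat 8 u v) = wconcat 8 (perm_word \<alpha> u) (perm_word \<beta> v)"
proof
  fix i
  have "x < 8 \<Longrightarrow> inv \<alpha> x < 8" "x < 8 \<Longrightarrow> inv \<beta> x < 8" "8 \<le> x \<Longrightarrow> inv \<beta> x = x" for x
    using permutes_in_image[OF permutes_inv[OF assms(1)]] permutes_in_image[OF permutes_inv[OF assms(2)]]
      permutes_not_in[OF permutes_inv[OF assms(2)]] by auto
  then show "perm_word (block_perm \<alpha> \<beta>) (wconcat 8 u v) i = wconcat 8 (perm_word \<alpha> u) (perm_word \<beta> v) i"
    by (auto simp: perm_word_def inv_block_perm[OF assms] block_perm_def wconcat_def)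
qed

lemma perm_word_affine_image_ham_coset:
  assumes "linear_perm A" and "t < 8" and "p < 8"
  shows "perm_word (affine_perm A t) ` ham_coset p = ham_coset (A p)"
proof (rule card_subset_eq)
  show "perm_word (affine_perm A t) ` ham_coset p \<subseteq> ham_coset (A p)"
    using perm_word_affine_ham_coset[OF assms(1,2)] by blast
  have "inj (perm_word (affine_perm A t))"
    using inj_perm_word affine_perm_permutes[OF assms(1,2)] permutes_bij by blast
  then show "card (perm_word (affine_perm A t) ` ham_coset p) = card (ham_coset (A p))"
    using assms by (simp add: card_image inj_on_subset card_ham_coset linear_perm_less_8)
qed simp

lemma perm_word_block_perm_code_prod:
  assumes "\<alpha> permutes {..<8}" and "\<beta> permutes {..<8}"
  shows "perm_word (block_perm \<alpha> \<beta>) ` code_prod 8 U V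
      = code_prod 8 (perm_word \<alpha> ` U) (perm_word \<beta> ` V)"
proof (intro equalityI subsetI)
  fix w assume "w \<in> perm_word (block_perm \<alpha> \<beta>) ` code_prod 8 U V"
  then show "w \<in> code_prod 8 (perm_word \<alpha> ` U) (perm_word \<beta> ` V)"
    by (fastforce simp: code_prod_def perm_word_block_perm[OF assms])
next
  fix w assume "w \<in> code_prod 8 (perm_word \<alpha> ` U) (perm_word \<beta> ` V)"
  then obtain u v where "u \<in> U" "v \<in> V" "w = wconcat 8 (perm_word \<alpha> u) (perm_word \<beta> v)"
    by (auto simp: code_prod_def)
  then show "w \<in> perm_word (block_perm \<alpha> \<beta>) ` code_prod 8 U V"
    by (auto simp: code_prod_def perm_word_block_perm[OF assms] intro!: image_eqI[of _ _ "wconcat 8 u v"])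
qed

lemma perm_word_block_image_coset_block:
  assumes A: "linear_perm A" "s < 8" and B: "linear_perm B" "t < 8" and "p < 8" "q < 8"
  shows "perm_word (block_perm (affine_perm A s) (affine_perm B t)) ` coset_block (p, q)
      = coset_block (A p, B q)"
  using assms
  by (simp add: coset_block_def perm_word_block_perm_code_prod affine_perm_permutes
      perm_word_affine_image_ham_coset)

lemma image_coset_code:
  assumes "\<And>p q. (p, q) \<in> W \<Longrightarrow> g ` coset_block (p, q) = coset_block (h (p, q))"
  shows "g ` coset_code W = coset_code (h ` W)"
proof -
  have "g ` coset_code W = (\<Union>v\<in>W. g ` coset_block v)"
    by (simp add: coset_code_def image_UN)
  also have "\<dots> = (\<Union>v\<in>W. coset_block (h v))"
    using assms by (intro SUP_cong refl) (metis prod.collapse)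
  finally show ?thesis
    by (simp add: coset_code_def)
qed

lemma isometry_map_image: "isometry_map x \<pi> ` S = (\<lambda>w. x \<oplus> w) ` perm_word \<pi> ` S"
  by (auto simp: isometry_map_def)

lemma isometries_block_perm:
  assumes "linear_perm A" "s < 8" and "linear_perm B" "t < 8" and "W \<subseteq> {..<8} \<times> {..<8}"
  shows "(zero_word, block_perm (affine_perm A s) (affine_perm B t))
           \<in> isometries 16 (coset_code W) (coset_code ((\<lambda>(p, q). (A p, B q)) ` W))"
proof -
  have "block_perm (affine_perm A s) (affine_perm B t) permutes {..<16}"
    using assms by (simp add: block_perm_permutes affine_perm_permutes)
  moreover have "perm_word (block_perm (affine_perm A s) (affine_perm B t)) ` coset_code W
      = coset_code ((\<lambda>(p, q). (A p, B q)) ` W)"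
    using assms(5)
    by (intro image_coset_code) (simp add: perm_word_block_image_coset_block[OF assms(1-4)] subset_iff)
  ultimately show ?thesis
    by (simp add: isometries_def isometry_map_image)
qed

lemma isometries_translate:
  assumes "u \<in> coset_block (a, b)"
  shows "(u, id) \<in> isometries 16 (coset_code W) (coset_code ((\<lambda>(p, q). (xor a p, xor b q)) ` W))"
proof -
  have "(\<lambda>w. u \<oplus> w) ` coset_code W = coset_code ((\<lambda>(p, q). (xor a p, xor b q)) ` W)"
    by (intro image_coset_code) (simp add: translate_coset_block[OF assms])
  then show ?thesis
    using coset_block_Fn[OF assms] by (simp add: isometries_def isometry_map_image)
qed

definition swap_halves :: "nat \<Rightarrow> nat" where
  "swap_halves i = (if i < 8 then i + 8 else if i < 16 then i - 8 else i)"

lemma swap_halves_permutes: "swap_halves permutes {..<16}"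
  by (rule inj_imp_permutes) (auto simp: inj_on_def swap_halves_def split: if_splits)

lemma perm_word_swap_halves:
  assumes "u \<in> Fn 8" and "v \<in> Fn 8"
  shows "perm_word swap_halves (wconcat 8 u v) = wconcat 8 v u"
proof -
  have "swap_halves \<circ> swap_halves = id"
    by (auto simp: swap_halves_def fun_eq_iff)
  then have "inv swap_halves = swap_halves"
    by (metis inv_unique_comp)
  then show ?thesis
    using assms by (auto simp: perm_word_def swap_halves_def wconcat_def fun_eq_iff Fn_def)
qed

lemma isometries_swap_halves:
  "(zero_word, swap_halves) \<in> isometries 16 (coset_code W) (coset_code (prod.swap ` W))"
proof -
  have "perm_word swap_halves ` coset_block (p, q) = coset_block (q, p)" for p q
    by (force simp: coset_block_def code_prod_def perm_word_swap_halves ham_coset_def)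
  then have "perm_word swap_halves ` coset_code W = coset_code (prod.swap ` W)"
    by (intro image_coset_code) simp
  then show ?thesis
    using swap_halves_permutes by (simp add: isometries_def isometry_map_image)
qed

section \<open>Linear equivalence and the classification\<close>

definition lin_equivalent :: "(nat \<Rightarrow> nat) \<Rightarrow> (nat \<Rightarrow> nat) \<Rightarrow> bool" where
  "lin_equivalent f g \<longleftrightarrow> (\<exists>A B. linear_perm A \<and> linear_perm B \<and> (\<forall>y<8. g (A y) = B (f y)))"

lemma lin_equivalent_sym:
  assumes "lin_equivalent f g"
  shows "lin_equivalent g f"
proof -
  obtain A B where AB: "linear_perm A" "linear_perm B" "\<forall>y<8. g (A y) = B (f y)"
    using assms by (auto simp: lin_equivalent_def)
  have A: "A permutes {..<8}" and B: "B permutes {..<8}"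
    using AB by (simp_all add: linear_perm_def)
  have "f (inv A z) = inv B (g z)" if "z < 8" for z
    using AB(3) permutes_in_image[OF permutes_inv[OF A]] that
    by (metis A B lessThan_iff permutes_inverses)
  then show ?thesis
    unfolding lin_equivalent_def using AB(1,2) linear_perm_inv by blast
qed

lemma lin_equivalent_trans:
  assumes "lin_equivalent f g" and "lin_equivalent g h"
  shows "lin_equivalent f h"
proof -
  obtain A B A' B' where "linear_perm A" "linear_perm B" "\<forall>y<8. g (A y) = B (f y)"
    "linear_perm A'" "linear_perm B'" "\<forall>y<8. h (A' y) = B' (g y)"
    using assms by (auto simp: lin_equivalent_def)
  then show ?thesis
    unfolding lin_equivalent_def
    by (intro exI[of _ "A' \<circ> A"] exI[of _ "B' \<circ> B"]) (simp add: linear_perm_comp linear_perm_less_8)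
qed

lemma graph_subset: "f permutes {..<8} \<Longrightarrow> graph f \<subseteq> {..<8} \<times> {..<8}"
  using permutes_in_image by (fastforce simp: graph_def)

lemma isometries_lin_equivalent:
  assumes "lin_equivalent f g" and "f permutes {..<8}"
  obtains A B where "linear_perm A" "linear_perm B"
    "(zero_word, block_perm (affine_perm A 0) (affine_perm B 0))
       \<in> isometries 16 (coset_code (graph f)) (coset_code (graph g))"
proof -
  obtain A B where AB: "linear_perm A" "linear_perm B" "\<forall>y<8. g (A y) = B (f y)"
    using assms(1) by (auto simp: lin_equivalent_def)
  have "(\<lambda>(p, q). (A p, B q)) ` graph f = (\<lambda>y. (y, g y)) ` A ` {..<8}"
    using AB(3) by (force simp: graph_def image_image)
  also have "A ` {..<8} = {..<8}"
    using AB(1) by (simp add: linear_perm_def permutes_image)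
  finally have "(\<lambda>(p, q). (A p, B q)) ` graph f = graph g"
    by (simp add: graph_def)
  then show ?thesis
    using that[OF AB(1,2)] isometries_block_perm[OF AB(1) _ AB(2) _ graph_subset[OF assms(2)], of 0 0]
    by simp
qed

lemma codes_isomorphic_lin_equivalent:
  "lin_equivalent f g \<Longrightarrow> f permutes {..<8} \<Longrightarrow> codes_isomorphic 16 (coset_code (graph f)) (coset_code (graph g))"
  unfolding codes_isomorphic_iff_isometries by (metis empty_iff isometries_lin_equivalent)

lemma lin_equivalent_normal_form:
  assumes \<tau>: "\<tau> permutes {..<8}" and "\<tau> 0 = 0"
  obtains f where "f permutes {..<8}" "f 0 = 0" "f 1 = 1" "f 2 = 2" "f 4 = 4" "lin_equivalent f \<tau>"
proof -
  have inj: "\<tau> x = \<tau> y \<longleftrightarrow> x = y" for x y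
    using \<tau> by (meson permutes_inj inj_eq)
  have lt: "x < 8 \<Longrightarrow> \<tau> x < 8" for x
    using permutes_in_image[OF \<tau>] by simp
  obtain r where r: "r \<in> {4, 5}" "\<tau> r \<noteq> xor (\<tau> 1) (\<tau> 2)"
  proof (cases "\<tau> 4 = xor (\<tau> 1) (\<tau> 2)")
    case True
    then show ?thesis
      using that[of 5] inj[of 4 5] by auto
  next
    case False
    then show ?thesis
      using that[of 4] by auto
  qed
  define A where "A = lin_map 1 2 r"
  define M where "M = lin_map (\<tau> 1) (\<tau> 2) (\<tau> r)"
  have A: "linear_perm A"
    unfolding A_def using r by (intro linear_perm_lin_map) auto
  have M: "linear_perm M"
    unfolding M_def
  proof (rule linear_perm_lin_map)
    show "\<tau> 1 < 8" "\<tau> 2 < 8" "\<tau> r < 8"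
      using lt r by auto
    show "\<tau> 1 \<noteq> 0" "\<tau> 2 \<noteq> 0" "\<tau> r \<noteq> 0"
      using inj[of 1 0] inj[of 2 0] inj[of r 0] assms(2) r by auto
    show "\<tau> 1 \<noteq> \<tau> 2" "\<tau> 1 \<noteq> \<tau> r" "\<tau> 2 \<noteq> \<tau> r"
      using inj r by auto
    show "xor (\<tau> 1) (\<tau> 2) \<noteq> \<tau> r"
      using r(2) by simp
  qed
  have pM: "M permutes {..<8}"
    using M by (simp add: linear_perm_def)
  define f where "f = inv M \<circ> \<tau> \<circ> A"
  have "f permutes {..<8}"
    unfolding f_def using A M \<tau> by (intro permutes_compose permutes_inv) (simp_all add: linear_perm_def)
  moreover have "f 0 = 0" "f 1 = 1" "f 2 = 2" "f 4 = 4"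
    using permutes_inverses(2)[OF pM, of 0] permutes_inverses(2)[OF pM, of 1]
      permutes_inverses(2)[OF pM, of 2] permutes_inverses(2)[OF pM, of 4] assms(2)
    by (simp_all add: f_def A_def M_def lin_map_def)
  moreover have "lin_equivalent f \<tau>"
    unfolding lin_equivalent_def using A M permutes_inverses(1)[OF pM]
    by (intro exI[of _ A] exI[of _ M]) (simp add: f_def)
  ultimately show ?thesis
    using that by blast
qed

text \<open>Representatives of the four classes: the identity, the transposition (6 7), the 3-cycle
  (5 6 7) and the 4-cycle (3 5 6 7); the index is the rank of the corresponding code.\<close>
definition rep :: "nat \<Rightarrow> nat \<Rightarrow> nat" where
  "rep r x =
    (if r = 12 then (if x = 6 then 7 else if x = 7 then 6 else x)
     else if r = 13 then (if x = 5 then 6 else if x = 6 then 7 else if x = 7 then 5 else x)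
     else if r = 14 then (if x = 3 then 5 else if x = 5 then 6 else if x = 6 then 7 else if x = 7 then 3 else x)
     else x)"

lemma rep_permutes: "r \<in> {11, 12, 13, 14} \<Longrightarrow> rep r permutes {..<8}"
  by (intro inj_imp_permutes) (auto simp: rep_def inj_on_def split: if_splits)

lemma rep_zero [simp]: "rep r 0 = 0"
  by (simp add: rep_def)

lemma rep_lin_equivalent_by_lin_maps:
  assumes "\<forall>y<8. rep r (lin_map a1 a2 a4 y) = lin_map b1 b2 b4 (f y)"
    and "r \<in> {11, 12, 13, 14}" and "linear_perm (lin_map a1 a2 a4)" and "linear_perm (lin_map b1 b2 b4)"
  shows "\<exists>r\<in>{11, 12, 13, 14}. lin_equivalent f (rep r)"
  using assms unfolding lin_equivalent_def by blast

lemma normal_form_cases: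
  fixes f :: "nat \<Rightarrow> nat"
  assumes "f permutes {..<8}" and fixed: "f 0 = 0" "f 1 = 1" "f 2 = 2" "f 4 = 4"
  obtains
      "f 3 = 3" "f 5 = 5" "f 6 = 6" "f 7 = 7"
    | "f 3 = 3" "f 5 = 5" "f 6 = 7" "f 7 = 6"
    | "f 3 = 3" "f 5 = 6" "f 6 = 5" "f 7 = 7"
    | "f 3 = 3" "f 5 = 7" "f 6 = 6" "f 7 = 5"
    | "f 3 = 5" "f 5 = 3" "f 6 = 6" "f 7 = 7"
    | "f 3 = 6" "f 5 = 5" "f 6 = 3" "f 7 = 7"
    | "f 3 = 7" "f 5 = 5" "f 6 = 6" "f 7 = 3"
    | "f 3 = 3" "f 5 = 6" "f 6 = 7" "f 7 = 5"
    | "f 3 = 3" "f 5 = 7" "f 6 = 5" "f 7 = 6"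
    | "f 3 = 5" "f 5 = 3" "f 6 = 7" "f 7 = 6"
    | "f 3 = 5" "f 5 = 6" "f 6 = 3" "f 7 = 7"
    | "f 3 = 5" "f 5 = 7" "f 6 = 6" "f 7 = 3"
    | "f 3 = 6" "f 5 = 3" "f 6 = 5" "f 7 = 7"
    | "f 3 = 6" "f 5 = 5" "f 6 = 7" "f 7 = 3"
    | "f 3 = 6" "f 5 = 7" "f 6 = 3" "f 7 = 5"
    | "f 3 = 7" "f 5 = 3" "f 6 = 6" "f 7 = 5"
    | "f 3 = 7" "f 5 = 5" "f 6 = 3" "f 7 = 6"
    | "f 3 = 7" "f 5 = 6" "f 6 = 5" "f 7 = 3"
    | "f 3 = 5" "f 5 = 6" "f 6 = 7" "f 7 = 3"
    | "f 3 = 5" "f 5 = 7" "f 6 = 3" "f 7 = 6"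
    | "f 3 = 6" "f 5 = 3" "f 6 = 7" "f 7 = 5"
    | "f 3 = 6" "f 5 = 7" "f 6 = 5" "f 7 = 3"
    | "f 3 = 7" "f 5 = 3" "f 6 = 5" "f 7 = 6"
    | "f 3 = 7" "f 5 = 6" "f 6 = 3" "f 7 = 5"
proof -
  have inj: "f x = f y \<longleftrightarrow> x = y" for x y
    using assms(1) by (meson permutes_inj inj_eq)
  have "f x \<in> {3, 5, 6, 7}" if "x \<in> {3, 5, 6, 7}" for x
  proof -
    have "f x \<noteq> 0" "f x \<noteq> 1" "f x \<noteq> 2" "f x \<noteq> 4"
      using that inj[of x 0] inj[of x 1] inj[of x 2] inj[of x 4] fixed by auto
    moreover have "f x < 8"
      using that permutes_in_image[OF assms(1), of x] by auto
    ultimately show ?thesis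
      unfolding less_8_iff by simp
  qed
  then have images: "f 3 \<in> {3, 5, 6, 7}" "f 5 \<in> {3, 5, 6, 7}" "f 6 \<in> {3, 5, 6, 7}" "f 7 \<in> {3, 5, 6, 7}"
    and distinct: "f 3 \<noteq> f 5" "f 3 \<noteq> f 6" "f 3 \<noteq> f 7" "f 5 \<noteq> f 6" "f 5 \<noteq> f 7" "f 6 \<noteq> f 7"
    by (simp_all add: inj)
  show ?thesis
    using images distinct by (elim insertE emptyE; simp only: that simp_thms numeral_eq_iff semiring_norm)
qed

text \<open>The witnesses A = lin_map a1 a2 a4 and B = lin_map b1 b2 b4 with rep r \<circ> A = B \<circ> f
  were found by a computer search.\<close>
lemma normal_form_lin_equivalent_rep:
  assumes "f permutes {..<8}" and fixed: "f 0 = 0" "f 1 = 1" "f 2 = 2" "f 4 = 4"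
  shows "\<exists>r\<in>{11, 12, 13, 14}. lin_equivalent f (rep r)"
proof (cases rule: normal_form_cases[OF assms])
  case 1
  show ?thesis
    by (rule rep_lin_equivalent_by_lin_maps[of 11 1 2 4 1 2 4], simp only: all_less_8 1 fixed)
      (simp_all add: linear_perm_lin_map lin_map_def rep_def)
next
  case 2
  show ?thesis
    by (rule rep_lin_equivalent_by_lin_maps[of 12 1 2 4 1 2 4], simp only: all_less_8 2 fixed)
      (simp_all add: linear_perm_lin_map lin_map_def rep_def)
next
  case 3
  show ?thesis
    by (rule rep_lin_equivalent_by_lin_maps[of 12 2 3 4 2 3 4], simp only: all_less_8 3 fixed)
      (simp_all add: linear_perm_lin_map lin_map_def rep_def)
next
  case 4
  show ?thesis
    by (rule rep_lin_equivalent_by_lin_maps[of 12 2 1 4 2 1 4], simp only: all_less_8 4 fixed)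
      (simp_all add: linear_perm_lin_map lin_map_def rep_def)
next
  case 5
  show ?thesis
    by (rule rep_lin_equivalent_by_lin_maps[of 12 2 4 5 2 4 5], simp only: all_less_8 5 fixed)
      (simp_all add: linear_perm_lin_map lin_map_def rep_def)
next
  case 6
  show ?thesis
    by (rule rep_lin_equivalent_by_lin_maps[of 12 2 4 3 2 4 3], simp only: all_less_8 6 fixed)
      (simp_all add: linear_perm_lin_map lin_map_def rep_def)
next
  case 7
  show ?thesis
    by (rule rep_lin_equivalent_by_lin_maps[of 12 2 4 1 2 4 1], simp only: all_less_8 7 fixed)
      (simp_all add: linear_perm_lin_map lin_map_def rep_def)
next
  case 8
  show ?thesis
    by (rule rep_lin_equivalent_by_lin_maps[of 13 1 2 4 1 2 4], simp only: all_less_8 8 fixed)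
      (simp_all add: linear_perm_lin_map lin_map_def rep_def)
next
  case 9
  show ?thesis
    by (rule rep_lin_equivalent_by_lin_maps[of 13 1 3 4 1 3 4], simp only: all_less_8 9 fixed)
      (simp_all add: linear_perm_lin_map lin_map_def rep_def)
next
  case 10
  show ?thesis
    by (rule rep_lin_equivalent_by_lin_maps[of 13 1 4 6 1 4 7], simp only: all_less_8 10 fixed)
      (simp_all add: linear_perm_lin_map lin_map_def rep_def)
next
  case 11
  show ?thesis
    by (rule rep_lin_equivalent_by_lin_maps[of 13 4 5 7 4 6 5], simp only: all_less_8 11 fixed)
      (simp_all add: linear_perm_lin_map lin_map_def rep_def)
next
  case 12
  show ?thesis
    by (rule rep_lin_equivalent_by_lin_maps[of 13 4 1 2 4 1 2], simp only: all_less_8 12 fixed)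
      (simp_all add: linear_perm_lin_map lin_map_def rep_def)
next
  case 13
  show ?thesis
    by (rule rep_lin_equivalent_by_lin_maps[of 13 4 5 6 4 6 7], simp only: all_less_8 13 fixed)
      (simp_all add: linear_perm_lin_map lin_map_def rep_def)
next
  case 14
  show ?thesis
    by (rule rep_lin_equivalent_by_lin_maps[of 13 1 4 2 1 4 2], simp only: all_less_8 14 fixed)
      (simp_all add: linear_perm_lin_map lin_map_def rep_def)
next
  case 15
  show ?thesis
    by (rule rep_lin_equivalent_by_lin_maps[of 13 4 1 6 4 1 7], simp only: all_less_8 15 fixed)
      (simp_all add: linear_perm_lin_map lin_map_def rep_def)
next
  case 16
  show ?thesis
    by (rule rep_lin_equivalent_by_lin_maps[of 13 4 1 3 4 1 3], simp only: all_less_8 16 fixed)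
      (simp_all add: linear_perm_lin_map lin_map_def rep_def)
next
  case 17
  show ?thesis
    by (rule rep_lin_equivalent_by_lin_maps[of 13 1 4 3 1 4 3], simp only: all_less_8 17 fixed)
      (simp_all add: linear_perm_lin_map lin_map_def rep_def)
next
  case 18
  show ?thesis
    by (rule rep_lin_equivalent_by_lin_maps[of 13 4 5 3 4 6 3], simp only: all_less_8 18 fixed)
      (simp_all add: linear_perm_lin_map lin_map_def rep_def)
next
  case 19
  show ?thesis
    by (rule rep_lin_equivalent_by_lin_maps[of 14 1 2 4 1 2 4], simp only: all_less_8 19 fixed)
      (simp_all add: linear_perm_lin_map lin_map_def rep_def)
next
  case 20
  show ?thesis
    by (rule rep_lin_equivalent_by_lin_maps[of 14 1 3 7 1 5 3], simp only: all_less_8 20 fixed)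
      (simp_all add: linear_perm_lin_map lin_map_def rep_def)
next
  case 21
  show ?thesis
    by (rule rep_lin_equivalent_by_lin_maps[of 14 1 2 6 1 2 7], simp only: all_less_8 21 fixed)
      (simp_all add: linear_perm_lin_map lin_map_def rep_def)
next
  case 22
  show ?thesis
    by (rule rep_lin_equivalent_by_lin_maps[of 14 1 3 6 1 5 7], simp only: all_less_8 22 fixed)
      (simp_all add: linear_perm_lin_map lin_map_def rep_def)
next
  case 23
  show ?thesis
    by (rule rep_lin_equivalent_by_lin_maps[of 14 1 3 5 1 5 6], simp only: all_less_8 23 fixed)
      (simp_all add: linear_perm_lin_map lin_map_def rep_def)
next
  case 24
  show ?thesis
    by (rule rep_lin_equivalent_by_lin_maps[of 14 1 2 5 1 2 6], simp only: all_less_8 24 fixed)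
      (simp_all add: linear_perm_lin_map lin_map_def rep_def)
qed

lemma lin_equivalent_rep:
  assumes "\<tau> permutes {..<8}" and "\<tau> 0 = 0"
  obtains r where "r \<in> {11, 12, 13, 14}" "lin_equivalent \<tau> (rep r)"
proof -
  obtain f where f: "f permutes {..<8}" "f 0 = 0" "f 1 = 1" "f 2 = 2" "f 4 = 4" "lin_equivalent f \<tau>"
    using lin_equivalent_normal_form[OF assms] .
  then obtain r where "r \<in> {11, 12, 13, 14}" "lin_equivalent f (rep r)"
    using normal_form_lin_equivalent_rep by blast
  then show ?thesis
    using that lin_equivalent_trans[OF lin_equivalent_sym[OF f(6)]] by blast
qed

section \<open>Ranks of the representatives\<close>

definition span_labels :: "(nat \<Rightarrow> nat) \<Rightarrow> (nat \<times> nat) set" where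
  "span_labels f = {v. fst v < 8 \<and> snd v < 8 \<and> coset_block v \<subseteq> gf2_span (coset_code (graph f))}"

lemma graph_point_in_span_labels: "y < 8 \<Longrightarrow> f y < 8 \<Longrightarrow> (y, f y) \<in> span_labels f"
  using gf2_span_superset[of "coset_code (graph f)"] by (auto simp: span_labels_def coset_code_def graph_def)

lemma span_labels_xor:
  assumes "(a, b) \<in> span_labels f" and "(c, d) \<in> span_labels f"
  shows "(xor a c, xor b d) \<in> span_labels f"
proof -
  have lt: "a < 8" "b < 8" "c < 8" "d < 8"
    using assms by (auto simp: span_labels_def)
  obtain u where u: "u \<in> coset_block (a, b)"
    using coset_leaders_in_coset_block[of a b] lt by blast
  have "w \<in> gf2_span (coset_code (graph f))" if "w \<in> coset_block (xor a c, xor b d)" for w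
  proof -
    have "u \<oplus> w \<in> coset_block (c, d)"
      using coset_block_wadd[OF u that] by (simp add: xor_nat.add_left_self)
    then have "u \<in> gf2_span (coset_code (graph f))" "u \<oplus> w \<in> gf2_span (coset_code (graph f))"
      using u assms by (auto simp: span_labels_def)
    then have "u \<oplus> (u \<oplus> w) \<in> gf2_span (coset_code (graph f))"
      by (rule gf2_span_wadd)
    then show ?thesis
      by simp
  qed
  then show ?thesis
    using lt by (auto simp: span_labels_def xor_less_8)
qed

lemma span_labels_diagonal:
  assumes "f 0 = 0" "f 1 = 1" "f 2 = 2" "f 4 = 4" and "a < 8"
  shows "(a, a) \<in> span_labels f"
proof -
  have basis: "(0, 0) \<in> span_labels f" "(1, 1) \<in> span_labels f" "(2, 2) \<in> span_labels f" "(4, 4) \<in> span_labels f"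
    using graph_point_in_span_labels[of 0 f] graph_point_in_span_labels[of 1 f]
      graph_point_in_span_labels[of 2 f] graph_point_in_span_labels[of 4 f] assms(1-4) by simp_all
  have "(3, 3) \<in> span_labels f" "(5, 5) \<in> span_labels f" "(6, 6) \<in> span_labels f"
    using span_labels_xor[OF basis(2) basis(3)] span_labels_xor[OF basis(2) basis(4)]
      span_labels_xor[OF basis(3) basis(4)] by simp_all
  moreover from this have "(7, 7) \<in> span_labels f"
    using span_labels_xor[OF _ basis(4), of 3 3] by simp
  ultimately show ?thesis
    using assms(5) basis unfolding less_8_iff by auto
qed

definition diff_labels :: "nat set \<Rightarrow> (nat \<times> nat) set" where
  "diff_labels Z = {(a, b). a < 8 \<and> b < 8 \<and> xor a b \<in> Z}"

lemma card_diff_labels: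
  assumes "Z \<subseteq> {..<8}"
  shows "card (diff_labels Z) = 8 * card Z"
proof -
  have "diff_labels Z = (\<lambda>(a, z). (a, xor a z)) ` ({..<8} \<times> Z)"
    using assms by (force simp: diff_labels_def xor_nat.add_left_self xor_less_8 image_iff)
  moreover have "inj_on (\<lambda>(a, z). (a, xor a z)) ({..<8} \<times> Z)"
    by (auto simp: inj_on_def) (metis xor_nat.add_left_self)
  ultimately show ?thesis
    using assms finite_subset[OF assms] by (simp add: card_image card_cartesian_product)
qed

text \<open>For f in normal form, the span of the code consists of the blocks (a, b) with a + b in the
  subgroup Z generated by the differences y + f y, so its size is 256 * 8 * |Z|.\<close>
lemma code_rank_normal_form:
  assumes f: "f 0 = 0" "f 1 = 1" "f 2 = 2" "f 4 = 4" "\<And>y. y < 8 \<Longrightarrow> f y < 8"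
    and Z: "Z \<subseteq> {..<8}" "0 \<in> Z" "\<And>x y. x \<in> Z \<Longrightarrow> y \<in> Z \<Longrightarrow> xor x y \<in> Z"
      "\<And>y. y < 8 \<Longrightarrow> xor y (f y) \<in> Z"
    and gen: "\<And>z. z \<in> Z \<Longrightarrow> (0, z) \<in> span_labels f"
    and card: "card Z = 2 ^ k"
  shows "code_rank (coset_code (graph f)) = 11 + k"
proof -
  let ?V = "coset_code (diff_labels Z)"
  have subspace: "gf2_subspace ?V"
    unfolding gf2_subspace_def
  proof (intro conjI ballI)
    show "zero_word \<in> ?V"
      using zero_in_coset_block Z(2) by (force simp: coset_code_def diff_labels_def)
    fix x y assume "x \<in> ?V" "y \<in> ?V"
    then obtain a b c d where "x \<in> coset_block (a, b)" "(a, b) \<in> diff_labels Z"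
      "y \<in> coset_block (c, d)" "(c, d) \<in> diff_labels Z"
      by (auto simp: coset_code_def)
    moreover have "xor (xor a c) (xor b d) = xor (xor a b) (xor c d)"
      by (simp add: xor.assoc xor.left_commute)
    ultimately have "x \<oplus> y \<in> coset_block (xor a c, xor b d)" "(xor a c, xor b d) \<in> diff_labels Z"
      using Z(3) coset_block_wadd by (auto simp: diff_labels_def xor_less_8)
    then show "x \<oplus> y \<in> ?V"
      by (auto simp: coset_code_def)
  qed
  have "graph f \<subseteq> diff_labels Z"
    using f(5) Z(4) by (auto simp: graph_def diff_labels_def)
  then have "gf2_span (coset_code (graph f)) \<subseteq> ?V"
    by (intro gf2_span_least[OF subspace]) (auto simp: coset_code_def)
  moreover have "diff_labels Z \<subseteq> span_labels f"
  proof
    fix v assume "v \<in> diff_labels Z"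
    then obtain a b where v: "v = (a, b)" "a < 8" "b < 8" "xor a b \<in> Z"
      by (auto simp: diff_labels_def)
    have "(xor a 0, xor a (xor a b)) \<in> span_labels f"
      by (rule span_labels_xor[OF span_labels_diagonal[OF f(1-4) v(2)] gen[OF v(4)]])
    then show "v \<in> span_labels f"
      using v by (simp add: xor_nat.add_left_self)
  qed
  then have "?V \<subseteq> gf2_span (coset_code (graph f))"
    by (auto simp: coset_code_def span_labels_def)
  ultimately have span: "gf2_span (coset_code (graph f)) = ?V"
    by (rule antisym)
  have "diff_labels Z \<subseteq> {..<8} \<times> {..<8}"
    by (auto simp: diff_labels_def)
  then have "card ?V = 2 ^ (11 + k)"
    using card_coset_code card_diff_labels[OF Z(1)] card by (simp add: power_add)
  then show ?thesis
    unfolding code_rank_def span by (rule gf2_dim_eq[OF subspace finite_coset_code])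
qed

lemma span_labels_difference:
  assumes "f 0 = 0" "f 1 = 1" "f 2 = 2" "f 4 = 4" and "y < 8" "f y < 8" and "xor y (f y) = z"
  shows "(0, z) \<in> span_labels f"
  using span_labels_xor[OF span_labels_diagonal[OF assms(1-5)] graph_point_in_span_labels[of y f]]
    assms(5-7) by simp

lemma code_rank_rep:
  assumes "r \<in> {11, 12, 13, 14}"
  shows "code_rank (coset_code (graph (rep r))) = r"
proof -
  have fixed: "rep r 0 = 0" "rep r 1 = 1" "rep r 2 = 2" "rep r 4 = 4"
    by (simp_all add: rep_def)
  have lt: "y < 8 \<Longrightarrow> rep r y < 8" for y
    using permutes_in_image[OF rep_permutes[OF assms]] by simp
  have diff: "(0, z) \<in> span_labels (rep r)" if "y < 8" "xor y (rep r y) = z" for y z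
    using span_labels_difference[OF fixed that(1) lt[OF that(1)] that(2)] .
  have zero: "(0, 0) \<in> span_labels (rep r)"
    by (rule diff[of 0]) simp_all
  consider "r = 11" | "r = 12" | "r = 13" | "r = 14"
    using assms by blast
  then show ?thesis
  proof cases
    case 1
    have gen: "(0, z) \<in> span_labels (rep r)" if "z \<in> {0}" for z
      using zero that by simp
    have "code_rank (coset_code (graph (rep r))) = 11 + 0"
      by (intro code_rank_normal_form[where Z = "{0}"] gen fixed lt) (simp_all add: rep_def 1)
    then show ?thesis using 1 by simp
  next
    case 2
    have "(0, 1) \<in> span_labels (rep r)"
      by (rule diff[of 6]) (simp_all add: rep_def 2)
    then have gen: "(0, z) \<in> span_labels (rep r)" if "z \<in> {0, 1}" for z
      using zero that by auto
    have "code_rank (coset_code (graph (rep r))) = 11 + 1"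
      by (intro code_rank_normal_form[where Z = "{0, 1}"] gen fixed lt) (auto simp: rep_def 2 less_8_iff)
    then show ?thesis using 2 by simp
  next
    case 3
    have "(0, 1) \<in> span_labels (rep r)" "(0, 2) \<in> span_labels (rep r)" "(0, 3) \<in> span_labels (rep r)"
      by (rule diff[of 6], simp, simp add: rep_def 3, rule diff[of 7], simp, simp add: rep_def 3,
          rule diff[of 5], simp, simp add: rep_def 3)
    then have gen: "(0, z) \<in> span_labels (rep r)" if "z \<in> {0, 1, 2, 3}" for z
      using zero that by auto
    have "code_rank (coset_code (graph (rep r))) = 11 + 2"
      by (intro code_rank_normal_form[where Z = "{0, 1, 2, 3}"] gen fixed lt) (auto simp: rep_def 3 less_8_iff)
    then show ?thesis using 3 by simp
  next
    case 4
    have "(0, 6) \<in> span_labels (rep r)" "(0, 3) \<in> span_labels (rep r)"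
      "(0, 1) \<in> span_labels (rep r)" "(0, 4) \<in> span_labels (rep r)"
      by (rule diff[of 3], simp, simp add: rep_def 4, rule diff[of 5], simp, simp add: rep_def 4,
          rule diff[of 6], simp, simp add: rep_def 4, rule diff[of 7], simp, simp add: rep_def 4)
    then have gen: "(0, z) \<in> span_labels (rep r)" if "z \<in> {..<8}" for z
      using that zero span_labels_xor[of 0 3 "rep r" 0 1] span_labels_xor[of 0 1 "rep r" 0 4]
        span_labels_xor[of 0 3 "rep r" 0 4] unfolding lessThan_iff less_8_iff by auto
    have "code_rank (coset_code (graph (rep r))) = 11 + 3"
      by (intro code_rank_normal_form[where Z = "{..<8}"] gen fixed lt) (simp_all add: xor_less_8 lt)
    then show ?thesis using 4 by simp
  qed
qed

section \<open>Neighbor transitivity\<close>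

lemma code_rank_lin_equivalent_rep:
  assumes "\<tau> permutes {..<8}" "\<tau> 0 = 0" and "r \<in> {11, 12, 13, 14}" and "lin_equivalent \<tau> (rep r)"
  shows "code_rank (coset_code (graph \<tau>)) = r"
proof -
  have "code_rank (coset_code (graph \<tau>)) = code_rank (coset_code (graph (rep r)))"
    using codes_isomorphic_lin_equivalent[OF assms(4,1)] assms(2) coset_code_Fn
    by (intro code_rank_isomorphic) (simp_all add: zero_in_coset_code_graph)
  then show ?thesis
    using code_rank_rep[OF assms(3)] by simp
qed

lemma lin_equivalent_if_code_rank_eq:
  assumes "f permutes {..<8}" "f 0 = 0" and "g permutes {..<8}" "g 0 = 0"
    and "code_rank (coset_code (graph f)) = code_rank (coset_code (graph g))"
  shows "lin_equivalent f g"
proof -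
  obtain r where r: "r \<in> {11, 12, 13, 14}" "lin_equivalent f (rep r)"
    using lin_equivalent_rep[OF assms(1,2)] .
  obtain s where s: "s \<in> {11, 12, 13, 14}" "lin_equivalent g (rep s)"
    using lin_equivalent_rep[OF assms(3,4)] .
  have "r = s"
    using code_rank_lin_equivalent_rep[OF assms(1,2) r] code_rank_lin_equivalent_rep[OF assms(3,4) s]
      assms(5) by simp
  then show ?thesis
    using r s lin_equivalent_trans lin_equivalent_sym by blast
qed

lemma lin_equivalent_if_isometric:
  assumes "f permutes {..<8}" "f 0 = 0" and "g permutes {..<8}" "g 0 = 0"
    and "(x, \<pi>) \<in> isometries 16 (coset_code (graph f)) (coset_code (graph g))"
  shows "lin_equivalent g f"
proof -
  have "code_rank (coset_code (graph f)) = code_rank (coset_code (graph g))"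
    using assms(2,4,5) zero_in_coset_code_graph
    by (intro code_rank_isomorphic[OF _ _ _ coset_code_Fn]) (auto simp: codes_isomorphic_iff_isometries)
  then show ?thesis
    using lin_equivalent_if_code_rank_eq[OF assms(3,4,1,2)] by simp
qed

text \<open>Reading the code from the codeword in block (a, f a) gives the code of the
  permutation z |-> f (z + a) + f a.\<close>
definition shift_perm :: "(nat \<Rightarrow> nat) \<Rightarrow> nat \<Rightarrow> nat \<Rightarrow> nat" where
  "shift_perm f a z = (if z < 8 then xor (f (xor z a)) (f a) else z)"

lemma shift_perm_permutes:
  assumes "f permutes {..<8}" and "a < 8"
  shows "shift_perm f a permutes {..<8}"
proof (rule inj_imp_permutes)
  have "f x < 8" if "x < 8" for x
    using that permutes_in_image[OF assms(1)] by simp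
  then show "shift_perm f a x \<in> {..<8}" if "x \<in> {..<8}" for x
    using that assms(2) by (simp add: shift_perm_def xor_less_8)
  show "inj_on (shift_perm f a) {..<8}"
  proof (rule inj_onI)
    fix x y assume "x \<in> {..<8}" "y \<in> {..<8}" "shift_perm f a x = shift_perm f a y"
    then have "f (xor x a) = f (xor y a)"
      by (simp add: shift_perm_def) (metis xor_nat.add_right_self)
    then have "xor x a = xor y a"
      using permutes_inj[OF assms(1)] by (simp add: inj_eq)
    then show "x = y"
      by (metis xor_nat.add_right_self)
  qed
qed (auto simp: shift_perm_def)

lemma shift_perm_zero: "shift_perm f a 0 = 0"
  by (simp add: shift_perm_def)

lemma graph_shift_perm:
  assumes "f permutes {..<8}" and "a < 8"
  shows "(\<lambda>(p, q). (xor a p, xor (f a) q)) ` graph f = graph (shift_perm f a)"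
proof -
  have "shift_perm f a (xor a y) = xor (f a) (f y)" if "y < 8" for y
    using that assms(2) by (simp add: shift_perm_def xor_less_8 xor.commute xor_nat.add_left_self)
  then have "(\<lambda>(p, q). (xor a p, xor (f a) q)) ` graph f = (\<lambda>z. (z, shift_perm f a z)) ` (\<lambda>y. xor a y) ` {..<8}"
    unfolding graph_def image_image by (intro image_cong) simp_all
  also have "(\<lambda>y. xor a y) ` {..<8} = {..<8}"
  proof
    show "(\<lambda>y. xor a y) ` {..<8} \<subseteq> {..<8}"
      using assms(2) by (auto simp: xor_less_8)
    show "{..<8} \<subseteq> (\<lambda>y. xor a y) ` {..<8}"
      using assms(2) by (auto simp: xor_less_8 intro!: image_eqI[of _ _ "xor a _"] simp: xor_nat.add_left_self)
  qed
  finally show ?thesis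
    by (simp add: graph_def)
qed

lemma Aut_related_codeword_zero:
  assumes "f permutes {..<8}" "f 0 = 0" and "u \<in> coset_code (graph f)"
  shows "Aut_related 16 (coset_code (graph f)) u zero_word"
proof -
  obtain a where a: "a < 8" "u \<in> coset_block (a, f a)"
    using assms(3) by (auto simp: coset_code_graph_iff)
  let ?g = "shift_perm f a"
  have g: "?g permutes {..<8}" "?g 0 = 0"
    using shift_perm_permutes[OF assms(1) a(1)] shift_perm_zero by auto
  have shift: "(u, id) \<in> isometries 16 (coset_code (graph f)) (coset_code (graph ?g))"
    using isometries_translate[OF a(2), of "graph f"] graph_shift_perm[OF assms(1) a(1)]
    by simp
  then have "lin_equivalent ?g f"
    by (rule lin_equivalent_if_isometric[OF assms(1,2) g])
  then obtain \<pi> where "(zero_word, \<pi>) \<in> isometries 16 (coset_code (graph ?g)) (coset_code (graph f))"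
    using isometries_lin_equivalent[OF _ g(1)] by metis
  from Aut_related_via[OF shift this, of u] show ?thesis
    by (simp add: isometry_map_def)
qed

lemma Aut_related_unit_vec_left:
  assumes "f permutes {..<8}" and "i < 8"
  shows "Aut_related 16 (coset_code (graph f)) (unit_vec i) (unit_vec 0)"
proof -
  have id: "linear_perm id"
    by (simp add: linear_perm_def)
  let ?\<pi> = "block_perm (affine_perm id i) (affine_perm id 0)"
  have "(zero_word, ?\<pi>) \<in> Aut 16 (coset_code (graph f))"
    using isometries_block_perm[OF id assms(2) id _ graph_subset[OF assms(1)]]
    by (simp add: Aut_eq_isometries)
  moreover have "bij ?\<pi>"
    using calculation by (simp add: Aut_eq_isometries isometries_bij)
  then have "isometry_map zero_word ?\<pi> (unit_vec i) = unit_vec 0"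
    using assms(2) by (simp add: isometry_map_def perm_word_unit_vec block_perm_def affine_perm_def)
  ultimately show ?thesis
    unfolding Aut_related_def by blast
qed

lemma Aut_related_unit_vec_zero:
  assumes "f permutes {..<8}" "f 0 = 0" and "j < 16"
  shows "Aut_related 16 (coset_code (graph f)) (unit_vec j) (unit_vec 0)"
proof (cases "j < 8")
  case True
  then show ?thesis
    using Aut_related_unit_vec_left[OF assms(1)] by blast
next
  case False
  let ?C = "coset_code (graph f)" and ?h = "inv f"
  have h: "?h permutes {..<8}" "?h 0 = 0"
    using permutes_inv[OF assms(1)] permutes_inv_eq[OF assms(1)] assms(2) by auto
  have "prod.swap ` graph f = graph ?h"
    using permutes_inverses[OF assms(1)] permutes_in_image[OF assms(1)] permutes_in_image[OF h(1)]
    by (force simp: graph_def image_iff)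
  then have swap: "(zero_word, swap_halves) \<in> isometries 16 ?C (coset_code (graph ?h))"
    using isometries_swap_halves[of "graph f"] by simp
  then have "lin_equivalent ?h f"
    by (rule lin_equivalent_if_isometric[OF assms(1,2) h])
  then obtain A B where AB: "linear_perm A" "linear_perm B"
    "(zero_word, block_perm (affine_perm A 0) (affine_perm B 0)) \<in> isometries 16 (coset_code (graph ?h)) ?C"
    using isometries_lin_equivalent[OF _ h(1)] by metis
  let ?\<pi> = "block_perm (affine_perm A 0) (affine_perm B 0)"
  have i: "?\<pi> (swap_halves j) < 8"
    using False assms(3) linear_perm_less_8[OF AB(1), of "j - 8"]
    by (simp add: swap_halves_def block_perm_def affine_perm_def)
  have "Aut_related 16 ?C (unit_vec j) (isometry_map zero_word ?\<pi> (isometry_map zero_word swap_halves (unit_vec j)))"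
    by (rule Aut_related_via[OF swap AB(3)])
  moreover have "bij ?\<pi>" "bij swap_halves"
    using isometries_bij[OF AB(3)] isometries_bij[OF swap] .
  ultimately have "Aut_related 16 ?C (unit_vec j) (unit_vec (?\<pi> (swap_halves j)))"
    by (simp add: isometry_map_def perm_word_unit_vec)
  then show ?thesis
    using Aut_related_trans Aut_related_unit_vec_left[OF assms(1) i] by blast
qed

lemma neighbor_transitive_coset_code:
  assumes "f permutes {..<8}" and "f 0 = 0"
  shows "neighbor_transitive 16 (coset_code (graph f))"
proof -
  let ?C = "coset_code (graph f)"
  have "Aut_related 16 ?C u (unit_vec 0)" if u: "u \<in> neighbors 16 ?C" for u
  proof -
    obtain c i where ci: "c \<in> ?C" "i < 16" "u = c \<oplus> unit_vec i"
      using neighbors_eq_unit_shift[OF u coset_code_Fn] by blast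
    obtain x \<pi> where g: "(x, \<pi>) \<in> Aut 16 ?C" "isometry_map x \<pi> c = zero_word"
      using Aut_related_codeword_zero[OF assms ci(1)] by (auto simp: Aut_related_def)
    have \<pi>: "\<pi> permutes {..<16}"
      using g(1) by (simp add: Aut_def)
    then have "isometry_map x \<pi> u = unit_vec (\<pi> i)"
      using g(2) ci(3) by (simp add: isometry_map_wadd perm_word_unit_vec permutes_bij)
    then have "Aut_related 16 ?C u (unit_vec (\<pi> i))"
      using g(1) by (auto simp: Aut_related_def)
    moreover have "\<pi> i < 16"
      using permutes_in_image[OF \<pi>] ci(2) by simp
    ultimately show ?thesis
      using Aut_related_trans Aut_related_unit_vec_zero[OF assms] by blast
  qed
  then show ?thesis
    unfolding neighbor_transitive_def
    using Aut_related_codeword_zero[OF assms] by (blast intro: transitive_on_if_Aut_related)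
qed

section \<open>The kernel\<close>

lemma coset_block_zero_subset_code_kernel:
  "coset_block (0, 0) \<subseteq> code_kernel 16 (coset_code (graph f))"
proof
  fix k assume k: "k \<in> coset_block (0, 0)"
  have shift: "c \<oplus> k \<in> coset_code (graph f)" if "c \<in> coset_code (graph f)" for c
    using that coset_block_wadd[OF _ k] by (fastforce simp: coset_code_graph_iff)
  have "code_shift (coset_code (graph f)) k = coset_code (graph f)"
  proof (intro equalityI subsetI)
    fix c assume "c \<in> coset_code (graph f)"
    then show "c \<in> code_shift (coset_code (graph f)) k"
      unfolding code_shift_def using shift by (intro rev_image_eqI[of "c \<oplus> k"]) simp_all
  qed (auto simp: code_shift_def shift)
  then show "k \<in> code_kernel 16 (coset_code (graph f))"
    using coset_block_Fn[OF k] by (simp add: code_kernel_def)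
qed

text \<open>A kernel vector k lies in the block of some a; translation by k moves the block of y to
  that of (y + a, f y + f a), so f is additive at a.\<close>
lemma code_kernel_coset_code:
  assumes f: "f 0 = 0" "\<And>y. y < 8 \<Longrightarrow> f y < 8"
    and nonlinear: "\<And>a. 0 < a \<Longrightarrow> a < 8 \<Longrightarrow> \<exists>y<8. f (xor y a) \<noteq> xor (f y) (f a)"
  shows "code_kernel 16 (coset_code (graph f)) = coset_block (0, 0)"
proof
  show "coset_block (0, 0) \<subseteq> code_kernel 16 (coset_code (graph f))"
    by (rule coset_block_zero_subset_code_kernel)
  show "code_kernel 16 (coset_code (graph f)) \<subseteq> coset_block (0, 0)"
  proof
    fix k assume "k \<in> code_kernel 16 (coset_code (graph f))"
    then have shift: "c \<oplus> k \<in> coset_code (graph f)" if "c \<in> coset_code (graph f)" for c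
      using that by (auto simp: code_kernel_def code_shift_def)
    obtain a where a: "a < 8" "k \<in> coset_block (a, f a)"
      using shift[OF zero_in_coset_code_graph[of f, OF f(1)]] by (auto simp: coset_code_graph_iff)
    show "k \<in> coset_block (0, 0)"
    proof (rule ccontr)
      assume "k \<notin> coset_block (0, 0)"
      then have "0 < a"
        using a f(1) by (auto intro: gr0I)
      then obtain y where y: "y < 8" "f (xor y a) \<noteq> xor (f y) (f a)"
        using nonlinear a(1) by blast
      obtain c where c: "c \<in> coset_block (y, f y)"
        using coset_leaders_in_coset_block[OF y(1) f(2)[OF y(1)]] by blast
      then have "c \<oplus> k \<in> coset_block (xor y a, xor (f y) (f a))"
        using coset_block_wadd[OF c a(2)] by simp
      moreover obtain z where "z < 8" "c \<oplus> k \<in> coset_block (z, f z)"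
        using shift c y(1) by (auto simp: coset_code_graph_iff)
      ultimately show False
        using y(2) coset_block_disjoint by fastforce
    qed
  qed
qed

lemma gf2_dim_code_kernel_rep_14: "gf2_dim (code_kernel 16 (coset_code (graph (rep 14)))) = 8"
proof -
  have "code_kernel 16 (coset_code (graph (rep 14))) = coset_block (0, 0)"
  proof (rule code_kernel_coset_code)
    show "rep 14 y < 8" if "y < 8" for y
      using that permutes_in_image[OF rep_permutes[of 14]] by simp
    show "\<exists>y<8. rep 14 (xor y a) \<noteq> xor (rep 14 y) (rep 14 a)" if "0 < a" "a < 8" for a
    proof (cases "a = 1")
      case True
      then show ?thesis
        by (intro exI[of _ 2]) (simp add: rep_def)
    next
      case False
      with that show ?thesis
        unfolding less_8_iff by (intro exI[of _ 1]) (elim disjE; simp add: rep_def)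
    qed
  qed simp
  moreover have "card (coset_block (0, 0)) = 2 ^ 8"
    by (simp add: card_coset_block)
  ultimately have "card (code_kernel 16 (coset_code (graph (rep 14)))) = 2 ^ 8"
    by simp
  then show ?thesis
    by (rule gf2_dim_eq[OF gf2_subspace_code_kernel finite_code_kernel])
qed

lemma codes_isomorphic_S_tau_iff:
  assumes \<tau>: "\<tau> permutes {..<8}" "\<tau> 0 = 0" and \<sigma>: "\<sigma> permutes {..<8}" "\<sigma> 0 = 0"
  shows "codes_isomorphic 16 (S_tau \<tau>) (S_tau \<sigma>) \<longleftrightarrow> code_rank (S_tau \<tau>) = code_rank (S_tau \<sigma>)"
  unfolding S_tau_eq_coset_code[OF \<tau>] S_tau_eq_coset_code[OF \<sigma>]
proof
  assume "codes_isomorphic 16 (coset_code (graph \<tau>)) (coset_code (graph \<sigma>))"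
  then show "code_rank (coset_code (graph \<tau>)) = code_rank (coset_code (graph \<sigma>))"
    using \<tau>(2) \<sigma>(2)
    by (intro code_rank_isomorphic[OF _ _ _ coset_code_Fn]) (simp_all add: zero_in_coset_code_graph)
next
  assume "code_rank (coset_code (graph \<tau>)) = code_rank (coset_code (graph \<sigma>))"
  then show "codes_isomorphic 16 (coset_code (graph \<tau>)) (coset_code (graph \<sigma>))"
    using codes_isomorphic_lin_equivalent[OF lin_equivalent_if_code_rank_eq[OF \<tau> \<sigma>] \<tau>(1)] by simp
qed

lemma code_ranks_S_tau: "{code_rank (S_tau \<tau>) | \<tau>. \<tau> permutes {..<8} \<and> \<tau> 0 = 0} = {11, 12, 13, 14}"
proof (intro equalityI subsetI)
  fix r assume "r \<in> {code_rank (S_tau \<tau>) | \<tau>. \<tau> permutes {..<8} \<and> \<tau> 0 = 0}"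
  then obtain \<tau> where \<tau>: "\<tau> permutes {..<8}" "\<tau> 0 = 0" and r: "r = code_rank (S_tau \<tau>)"
    by blast
  obtain s where "s \<in> {11, 12, 13, 14}" "lin_equivalent \<tau> (rep s)"
    using lin_equivalent_rep[OF \<tau>] .
  then show "r \<in> {11, 12, 13, 14}"
    unfolding r S_tau_eq_coset_code[OF \<tau>] using code_rank_lin_equivalent_rep[OF \<tau>] by metis
next
  fix r :: nat assume r: "r \<in> {11, 12, 13, 14}"
  then have "r = code_rank (S_tau (rep r))"
    using S_tau_eq_coset_code[OF rep_permutes[OF r] rep_zero] code_rank_rep[OF r] by simp
  then show "r \<in> {code_rank (S_tau \<tau>) | \<tau>. \<tau> permutes {..<8} \<and> \<tau> 0 = 0}"
    using rep_permutes[OF r] rep_zero[of r] by blast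
qed

lemma gf2_dim_code_kernel_S_tau:
  assumes \<tau>: "\<tau> permutes {..<8}" "\<tau> 0 = 0" and "code_rank (S_tau \<tau>) = 14"
  shows "gf2_dim (code_kernel 16 (S_tau \<tau>)) = 8"
proof -
  have "lin_equivalent \<tau> (rep 14)"
    using lin_equivalent_if_code_rank_eq[OF \<tau> rep_permutes[of 14] rep_zero] code_rank_rep[of 14] assms(3)
    by (simp add: S_tau_eq_coset_code[OF \<tau>])
  then have "codes_isomorphic 16 (coset_code (graph \<tau>)) (coset_code (graph (rep 14)))"
    using codes_isomorphic_lin_equivalent \<tau>(1) by blast
  then show ?thesis
    unfolding S_tau_eq_coset_code[OF \<tau>]
    using gf2_dim_code_kernel_rep_14 by (simp add: gf2_dim_code_kernel_isomorphic)
qed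

theorem theorem4:
  shows "(\<forall>\<tau>. \<tau> permutes {..<8} \<and> \<tau> 0 = 0 \<longrightarrow> neighbor_transitive 16 (S_tau \<tau>))
   \<and> (\<forall>\<tau> \<sigma>. \<tau> permutes {..<8} \<and> \<tau> 0 = 0 \<and> \<sigma> permutes {..<8} \<and> \<sigma> 0 = 0 \<longrightarrow>
        (codes_isomorphic 16 (S_tau \<tau>) (S_tau \<sigma>) \<longleftrightarrow> code_rank (S_tau \<tau>) = code_rank (S_tau \<sigma>)))
   \<and> {code_rank (S_tau \<tau>) | \<tau>. \<tau> permutes {..<8} \<and> \<tau> 0 = 0} = {11, 12, 13, 14}
   \<and> (\<forall>\<tau>. \<tau> permutes {..<8} \<and> \<tau> 0 = 0 \<and> code_rank (S_tau \<tau>) = 14 \<longrightarrow>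
        gf2_dim (code_kernel 16 (S_tau \<tau>)) = 8)"
proof (intro conjI allI impI)
  fix \<tau> :: "nat \<Rightarrow> nat" assume "\<tau> permutes {..<8} \<and> \<tau> 0 = 0"
  then show "neighbor_transitive 16 (S_tau \<tau>)"
    by (simp add: S_tau_eq_coset_code neighbor_transitive_coset_code)
next
  fix \<tau> \<sigma> :: "nat \<Rightarrow> nat" assume "\<tau> permutes {..<8} \<and> \<tau> 0 = 0 \<and> \<sigma> permutes {..<8} \<and> \<sigma> 0 = 0"
  then show "codes_isomorphic 16 (S_tau \<tau>) (S_tau \<sigma>) \<longleftrightarrow> code_rank (S_tau \<tau>) = code_rank (S_tau \<sigma>)"
    by (simp add: codes_isomorphic_S_tau_iff)
next
  show "{code_rank (S_tau \<tau>) | \<tau>. \<tau> permutes {..<8} \<and> \<tau> 0 = 0} = {11, 12, 13, 14}"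
    by (rule code_ranks_S_tau)
next
  fix \<tau> :: "nat \<Rightarrow> nat" assume "\<tau> permutes {..<8} \<and> \<tau> 0 = 0 \<and> code_rank (S_tau \<tau>) = 14"
  then show "gf2_dim (code_kernel 16 (S_tau \<tau>)) = 8"
    by (simp add: gf2_dim_code_kernel_S_tau)
qed

end
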